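(* Let $\Sigma$ be a finite set, $I\subseteq\Sigma\times\Sigma$ a symmetric irreflexive relation, $M=M(\Sigma,I)$, and $n\ge 1$. If the graph $\Gamma(M)$ contains no complete subgraph with more than $n$ vertices (equivalently, there are no $n+1$ distinct pairwise commuting letters in $\Sigma$), then the homological dimension of $M$ is at most $n$, i.e. the trivial module $\mathbb{Z}$ has a projective (indeed free) resolution over $\mathbb{Z}M$ of length at most $n$.
   Context: For a finite alphabet $\Sigma$ and a symmetric irreflexive relation $I\subseteq \Sigma\times\Sigma$, the free partially commutative monoid $M(\Sigma,I)$ is the monoid with presentation $\langle \Sigma \mid ab=ba \text{ for all } (a,b)\in I\rangle$. Its graph $\Gamma(M)$ is the simple undirected graph with vertex set $\Sigma$ in which $a,b$ are adjacent iff $(a,b)\in I$. The homological dimension of a monoid $M$ is the projective dimension of the trivial $\mathbb{Z}M$-module $\mathbb{Z}$ (with $n\cdot m=n$ for $m\in M$). *)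

theory Defs
  imports Main
begin

definition tstep :: "('a \<times> 'a) set \<Rightarrow> ('a list \<times> 'a list) set" where
  "tstep I = {(u @ [a, b] @ v, u @ [b, a] @ v) | u v a b. (a, b) \<in> I}"

definition tr_eq :: "('a \<times> 'a) set \<Rightarrow> ('a list \<times> 'a list) set" where
  "tr_eq I = (tstep I \<union> (tstep I)\<inverse>)\<^sup>*"

definition trace :: "('a \<times> 'a) set \<Rightarrow> 'a list \<Rightarrow> 'a list set" where
  "trace I w = tr_eq I `` {w}"

definition tmon :: "'a set \<Rightarrow> ('a \<times> 'a) set \<Rightarrow> 'a list set set" where
  "tmon Sig I = {trace I w | w. set w \<subseteq> Sig}"

definition tmult :: "('a \<times> 'a) set \<Rightarrow> 'a list set \<Rightarrow> 'a list set \<Rightarrow> 'a list set" where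
  "tmult I x y = trace I ((SOME u. u \<in> x) @ (SOME v. v \<in> y))"

text \<open>The free left ZM-module with basis J (J a set of natural numbers):
  finitely supported integer functions on J x M.\<close>
definition free_mod :: "'a set \<Rightarrow> ('a \<times> 'a) set \<Rightarrow> nat set
    \<Rightarrow> (nat \<times> 'a list set \<Rightarrow> int) set" where
  "free_mod Sig I J = {f. finite {p. f p \<noteq> 0} \<and>
     (\<forall>j x. f (j, x) \<noteq> 0 \<longrightarrow> j \<in> J \<and> x \<in> tmon Sig I)}"

definition act :: "('a \<times> 'a) set \<Rightarrow> 'a list set
    \<Rightarrow> (nat \<times> 'a list set \<Rightarrow> int) \<Rightarrow> (nat \<times> 'a list set \<Rightarrow> int)" where
  "act I m f = (\<lambda>(j, x). \<Sum>y \<in> {y. f (j, y) \<noteq> 0 \<and> tmult I m y = x}. f (j, y))"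

definition fadd :: "(nat \<times> 'a list set \<Rightarrow> int) \<Rightarrow> (nat \<times> 'a list set \<Rightarrow> int)
    \<Rightarrow> (nat \<times> 'a list set \<Rightarrow> int)" where
  "fadd f g = (\<lambda>p. f p + g p)"

text \<open>ZM-linear maps between free modules (additive and M-equivariant,
  which is equivalent to ZM-linearity).\<close>
definition zm_hom :: "'a set \<Rightarrow> ('a \<times> 'a) set \<Rightarrow> nat set \<Rightarrow> nat set
    \<Rightarrow> ((nat \<times> 'a list set \<Rightarrow> int) \<Rightarrow> (nat \<times> 'a list set \<Rightarrow> int)) \<Rightarrow> bool" where
  "zm_hom Sig I J K d \<longleftrightarrow>
     d ` free_mod Sig I J \<subseteq> free_mod Sig I K \<and>
     (\<forall>f \<in> free_mod Sig I J. \<forall>g \<in> free_mod Sig I J. d (fadd f g) = fadd (d f) (d g)) \<and>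
     (\<forall>m \<in> tmon Sig I. \<forall>f \<in> free_mod Sig I J. d (act I m f) = act I m (d f))"

definition augmentation :: "'a set \<Rightarrow> ('a \<times> 'a) set \<Rightarrow> nat set
    \<Rightarrow> ((nat \<times> 'a list set \<Rightarrow> int) \<Rightarrow> int) \<Rightarrow> bool" where
  "augmentation Sig I J e \<longleftrightarrow>
     (\<forall>f \<in> free_mod Sig I J. \<forall>g \<in> free_mod Sig I J. e (fadd f g) = e f + e g) \<and>
     (\<forall>m \<in> tmon Sig I. \<forall>f \<in> free_mod Sig I J. e (act I m f) = e f) \<and>
     e ` free_mod Sig I J = UNIV"

text \<open>An exact sequence 0 -> F_n -> ... -> F_1 -> F_0 -> Z -> 0 of free ZM-modules
  (some F_k may be zero, so this is a free resolution of length at most n).\<close>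
definition free_resolution :: "'a set \<Rightarrow> ('a \<times> 'a) set \<Rightarrow> nat \<Rightarrow> (nat \<Rightarrow> nat set)
    \<Rightarrow> (nat \<Rightarrow> (nat \<times> 'a list set \<Rightarrow> int) \<Rightarrow> (nat \<times> 'a list set \<Rightarrow> int))
    \<Rightarrow> ((nat \<times> 'a list set \<Rightarrow> int) \<Rightarrow> int) \<Rightarrow> bool" where
  "free_resolution Sig I n J d e \<longleftrightarrow>
     1 \<le> n \<and>
     augmentation Sig I (J 0) e \<and>
     (\<forall>k \<in> {1..n}. zm_hom Sig I (J k) (J (k - 1)) (d k)) \<and>
     d 1 ` free_mod Sig I (J 1) = {f \<in> free_mod Sig I (J 0). e f = 0} \<and>
     (\<forall>k. 1 \<le> k \<and> k < n \<longrightarrow>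
        d (k + 1) ` free_mod Sig I (J (k + 1)) = {f \<in> free_mod Sig I (J k). d k f = (\<lambda>_. 0)}) \<and>
     inj_on (d n) (free_mod Sig I (J n))"

definition has_free_resolution_le :: "'a set \<Rightarrow> ('a \<times> 'a) set \<Rightarrow> nat \<Rightarrow> bool" where
  "has_free_resolution_le Sig I n \<longleftrightarrow> (\<exists>J d e. free_resolution Sig I n J d e)"

end

theory Submission
  imports Defs "HOL-Library.Nat_Bijection"
begin

text \<open>The free \<open>\<int>M\<close>-module \<open>F\<^sub>k\<close> has basis \<open>m[C]\<close>, for \<open>m \<in> M\<close> and \<open>C\<close> a \<open>k\<close>-clique of the
  commutation graph. The boundary \<open>\<partial>(m[C]) = \<Sum>x\<in>C. \<plusminus>(mx[C - {x}] - m[C - {x}])\<close>, with signs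
  from a fixed order of the alphabet, and the augmentation \<open>F\<^sub>0 \<rightarrow> \<int>\<close> summing coefficients make
  this a complex, and \<open>F\<^sub>n\<^sub>+\<^sub>1 = 0\<close> because no clique has more than \<open>n\<close> letters; it remains to
  prove exactness. Grade by the length of \<open>m\<close>. If a last letter \<open>a\<close> of \<open>m w\<^sub>C\<close> (\<open>w\<^sub>C\<close> the
  product of the letters of \<open>C\<close>) is not in \<open>C\<close>, then \<open>a\<close> commutes with \<open>C\<close> and \<open>m = m'a\<close>. The
  homotopy \<open>h(m[C]) = \<plusminus>m'[C \<union> {a}]\<close> (and \<open>0\<close> if \<open>a \<in> C\<close>) satisfies \<open>\<partial>\<^sub>+h + h\<partial>\<^sub>+ = id\<close> in
  positive total length, where \<open>\<partial>\<^sub>+\<close> is the length-raising half of \<open>\<partial>\<close>. Subtracting \<open>\<partial>h\<close> of the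
  top-length part of a cycle therefore leaves a cycle of smaller length, and induction on the
  length concludes.\<close>

section \<open>Finitely supported integer functions\<close>

definition supp :: "('p \<Rightarrow> int) \<Rightarrow> 'p set" where
  "supp f = {p. f p \<noteq> 0}"

definition lin_ext :: "('p \<Rightarrow> 'q \<Rightarrow> int) \<Rightarrow> ('p \<Rightarrow> int) \<Rightarrow> 'q \<Rightarrow> int" where
  "lin_ext D f = (\<lambda>q. \<Sum>p\<in>supp f. f p * D p q)"

definition coeff_sum :: "('p \<Rightarrow> int) \<Rightarrow> int" where
  "coeff_sum f = (\<Sum>p\<in>supp f. f p)"

definition delta :: "'p \<Rightarrow> 'p \<Rightarrow> int" where
  "delta p = (\<lambda>q. if q = p then 1 else 0)"

lemma lin_ext_eq:
  assumes "finite S" "supp f \<subseteq> S"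
  shows "lin_ext D f q = (\<Sum>p\<in>S. f p * D p q)"
  unfolding lin_ext_def using assms
  by (intro sum.mono_neutral_left) (auto simp: supp_def)

lemma supp_add: "supp (\<lambda>p. f p + g p) \<subseteq> supp f \<union> supp g"
  by (auto simp: supp_def)
lemma supp_diff: "supp (\<lambda>p. f p - g p) \<subseteq> supp f \<union> supp g"
  by (auto simp: supp_def)

lemma lin_ext_add:
  assumes "finite (supp f)" "finite (supp g)"
  shows "lin_ext D (\<lambda>p. f p + g p) = (\<lambda>q. lin_ext D f q + lin_ext D g q)"
proof
  fix q
  let ?S = "supp f \<union> supp g"
  have "lin_ext D (\<lambda>p. f p + g p) q = (\<Sum>p\<in>?S. (f p + g p) * D p q)"
    using assms supp_add[of f g] by (intro lin_ext_eq) auto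
  also have "\<dots> = (\<Sum>p\<in>?S. f p * D p q) + (\<Sum>p\<in>?S. g p * D p q)"
    by (simp add: distrib_right sum.distrib)
  also have "\<dots> = lin_ext D f q + lin_ext D g q"
  proof -
    have "lin_ext D f q = (\<Sum>p\<in>?S. f p * D p q)" by (rule lin_ext_eq) (use assms in auto)
    moreover have "lin_ext D g q = (\<Sum>p\<in>?S. g p * D p q)" by (rule lin_ext_eq) (use assms in auto)
    ultimately show ?thesis by simp
  qed
  finally show "lin_ext D (\<lambda>p. f p + g p) q = lin_ext D f q + lin_ext D g q" .
qed

lemma lin_ext_diff:
  assumes "finite (supp f)" "finite (supp g)"
  shows "lin_ext D (\<lambda>p. f p - g p) = (\<lambda>q. lin_ext D f q - lin_ext D g q)"
proof
  fix q
  let ?S = "supp f \<union> supp g"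
  have "lin_ext D (\<lambda>p. f p - g p) q = (\<Sum>p\<in>?S. (f p - g p) * D p q)"
    using assms supp_diff[of f g] by (intro lin_ext_eq) auto
  also have "\<dots> = (\<Sum>p\<in>?S. f p * D p q) - (\<Sum>p\<in>?S. g p * D p q)"
    by (simp add: left_diff_distrib sum_subtractf)
  also have "\<dots> = lin_ext D f q - lin_ext D g q"
  proof -
    have "lin_ext D f q = (\<Sum>p\<in>?S. f p * D p q)" by (rule lin_ext_eq) (use assms in auto)
    moreover have "lin_ext D g q = (\<Sum>p\<in>?S. g p * D p q)" by (rule lin_ext_eq) (use assms in auto)
    ultimately show ?thesis by simp
  qed
  finally show "lin_ext D (\<lambda>p. f p - g p) q = lin_ext D f q - lin_ext D g q" .
qed

lemma lin_ext_zero[simp]: "lin_ext D (\<lambda>_. 0) = (\<lambda>_. 0)"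
  by (simp add: lin_ext_def supp_def)

lemma lin_ext_zero_op: "lin_ext (\<lambda>p q. 0) f = (\<lambda>q. 0)"
  by (simp add: lin_ext_def)

lemma supp_zero[simp]: "supp (\<lambda>_. 0) = {}"
  by (simp add: supp_def)

lemma lin_ext_op_add: "lin_ext (\<lambda>p q. D p q + D' p q) f = (\<lambda>q. lin_ext D f q + lin_ext D' f q)"
  by (simp add: lin_ext_def distrib_left sum.distrib)

lemma lin_ext_op_diff: "lin_ext (\<lambda>p q. D p q - D' p q) f = (\<lambda>q. lin_ext D f q - lin_ext D' f q)"
  by (simp add: lin_ext_def right_diff_distrib sum_subtractf)

lemma lin_ext_cong: "(\<And>p. p \<in> supp f \<Longrightarrow> D p = D' p) \<Longrightarrow> lin_ext D f = lin_ext D' f"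
  by (simp add: lin_ext_def)

lemma supp_sum_delta: "supp (\<lambda>q. \<Sum>i\<in>A. w i * delta (g i) q) \<subseteq> g ` A"
proof
  fix q assume "q \<in> supp (\<lambda>q. \<Sum>i\<in>A. w i * delta (g i) q)"
  then have "(\<Sum>i\<in>A. w i * delta (g i) q) \<noteq> 0" by (simp add: supp_def)
  then obtain i where "i \<in> A" "w i * delta (g i) q \<noteq> 0"
    by (meson sum.neutral)
  then show "q \<in> g ` A" by (auto simp: delta_def split: if_splits)
qed

lemma finite_supp_sum_delta: "finite A \<Longrightarrow> finite (supp (\<lambda>q. \<Sum>i\<in>A. w i * delta (g i) q))"
  by (rule finite_subset[OF supp_sum_delta]) simp

lemma lin_ext_sum_delta:
  assumes "finite A"
  shows "lin_ext D (\<lambda>q. \<Sum>i\<in>A. w i * delta (g i) q) = (\<lambda>q. \<Sum>i\<in>A. w i * D (g i) q)"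
proof
  fix q
  have "lin_ext D (\<lambda>q. \<Sum>i\<in>A. w i * delta (g i) q) q
      = (\<Sum>p\<in>g ` A. (\<Sum>i\<in>A. w i * delta (g i) p) * D p q)"
    using assms supp_sum_delta[of w g A] by (intro lin_ext_eq) auto
  also have "\<dots> = (\<Sum>p\<in>g ` A. \<Sum>i\<in>A. w i * delta (g i) p * D p q)"
    by (simp add: sum_distrib_right)
  also have "\<dots> = (\<Sum>i\<in>A. \<Sum>p\<in>g ` A. w i * delta (g i) p * D p q)"
    by (rule sum.swap)
  also have "\<dots> = (\<Sum>i\<in>A. w i * D (g i) q)"
  proof (rule sum.cong[OF refl])
    fix i assume "i \<in> A"
    have "(\<Sum>p\<in>g ` A. w i * delta (g i) p * D p q) = (\<Sum>p\<in>g ` A. if p = g i then w i * D p q else 0)"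
      by (rule sum.cong) (auto simp: delta_def)
    also have "\<dots> = w i * D (g i) q"
      using assms \<open>i \<in> A\<close> by (simp add: sum.delta)
    finally show "(\<Sum>p\<in>g ` A. w i * delta (g i) p * D p q) = w i * D (g i) q" .
  qed
  finally show "lin_ext D (\<lambda>q. \<Sum>i\<in>A. w i * delta (g i) q) q = (\<Sum>i\<in>A. w i * D (g i) q)" .
qed

lemma supp_delta: "supp (delta p) = {p}"
  by (auto simp: supp_def delta_def)

lemma lin_ext_delta: "lin_ext D (delta p) = D p"
proof
  fix q
  have "lin_ext D (delta p) q = (\<Sum>p'\<in>{p}. delta p p' * D p' q)"
    by (rule lin_ext_eq) (simp_all add: supp_delta)
  then show "lin_ext D (delta p) q = D p q" by (simp add: delta_def)
qed

lemma lin_ext_scaled_delta: "lin_ext D (\<lambda>q. w * delta p q) = (\<lambda>q. w * D p q)"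
  using lin_ext_sum_delta[of "{()}" D "\<lambda>_. w" "\<lambda>_. p"] by simp

lemma lin_ext_delta_id:
  assumes "finite (supp f)"
  shows "lin_ext delta f = f"
proof
  fix q
  have "lin_ext delta f q = (\<Sum>p\<in>insert q (supp f). f p * delta p q)"
    using assms by (intro lin_ext_eq) auto
  also have "\<dots> = (\<Sum>p\<in>insert q (supp f). if p = q then f q else 0)"
    by (rule sum.cong) (auto simp: delta_def)
  also have "\<dots> = f q" using assms by (simp add: sum.delta')
  finally show "lin_ext delta f q = f q" .
qed

lemma supp_lin_ext:
  "supp (lin_ext D f) \<subseteq> (\<Union>p\<in>supp f. supp (D p))"
proof
  fix q assume "q \<in> supp (lin_ext D f)"
  then have "(\<Sum>p\<in>supp f. f p * D p q) \<noteq> 0" by (simp add: supp_def lin_ext_def)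
  then obtain p where "p \<in> supp f" "f p * D p q \<noteq> 0" by (meson sum.neutral)
  then show "q \<in> (\<Union>p\<in>supp f. supp (D p))" by (auto simp: supp_def)
qed

lemma finite_supp_lin_ext:
  assumes "finite (supp f)" "\<And>p. p \<in> supp f \<Longrightarrow> finite (supp (D p))"
  shows "finite (supp (lin_ext D f))"
  using assms by (intro finite_subset[OF supp_lin_ext]) auto

lemma lin_ext_comp:
  assumes "finite (supp f)" "\<And>p. p \<in> supp f \<Longrightarrow> finite (supp (D p))"
  shows "lin_ext E (lin_ext D f) = lin_ext (\<lambda>p. lin_ext E (D p)) f"
proof
  fix q
  let ?T = "\<Union>p\<in>supp f. supp (D p)"
  have fT: "finite ?T" using assms by auto
  have "lin_ext E (lin_ext D f) q = (\<Sum>r\<in>?T. lin_ext D f r * E r q)"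
    using fT supp_lin_ext[of D f] by (intro lin_ext_eq) auto
  also have "\<dots> = (\<Sum>r\<in>?T. (\<Sum>p\<in>supp f. f p * D p r) * E r q)"
    by (simp add: lin_ext_def)
  also have "\<dots> = (\<Sum>r\<in>?T. \<Sum>p\<in>supp f. f p * (D p r * E r q))"
    by (simp add: sum_distrib_right mult.assoc)
  also have "\<dots> = (\<Sum>p\<in>supp f. \<Sum>r\<in>?T. f p * (D p r * E r q))"
    by (rule sum.swap)
  also have "\<dots> = (\<Sum>p\<in>supp f. f p * lin_ext E (D p) q)"
  proof (rule sum.cong[OF refl])
    fix p assume p: "p \<in> supp f"
    have "lin_ext E (D p) q = (\<Sum>r\<in>?T. D p r * E r q)"
      using fT p by (intro lin_ext_eq) auto
    then show "(\<Sum>r\<in>?T. f p * (D p r * E r q)) = f p * lin_ext E (D p) q"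
      by (simp add: sum_distrib_left)
  qed
  also have "\<dots> = lin_ext (\<lambda>p. lin_ext E (D p)) f q" by (simp add: lin_ext_def)
  finally show "lin_ext E (lin_ext D f) q = lin_ext (\<lambda>p. lin_ext E (D p)) f q" .
qed

lemma coeff_sum_as_lin_ext: "coeff_sum f = lin_ext (\<lambda>_ _. 1) f ()"
  by (simp add: coeff_sum_def lin_ext_def)

lemma coeff_sum_eq:
  assumes "finite S" "supp f \<subseteq> S"
  shows "coeff_sum f = (\<Sum>p\<in>S. f p)"
  using lin_ext_eq[OF assms, of "\<lambda>_ _. 1" "()"] by (simp add: coeff_sum_as_lin_ext)

lemma coeff_sum_sum_delta:
  "finite A \<Longrightarrow> coeff_sum (\<lambda>q. \<Sum>i\<in>A. w i * delta (g i) q) = (\<Sum>i\<in>A. w i)"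
  by (simp add: coeff_sum_as_lin_ext lin_ext_sum_delta)

lemma coeff_sum_add:
  "finite (supp f) \<Longrightarrow> finite (supp g) \<Longrightarrow>
    coeff_sum (\<lambda>p. f p + g p) = coeff_sum f + coeff_sum g"
  by (simp add: coeff_sum_as_lin_ext lin_ext_add)

lemma coeff_sum_diff:
  "finite (supp f) \<Longrightarrow> finite (supp g) \<Longrightarrow>
    coeff_sum (\<lambda>p. f p - g p) = coeff_sum f - coeff_sum g"
  by (simp add: coeff_sum_as_lin_ext lin_ext_diff)

lemma coeff_sum_lin_ext:
  assumes "finite (supp f)" "\<And>p. p \<in> supp f \<Longrightarrow> finite (supp (D p))"
  shows "coeff_sum (lin_ext D f) = (\<Sum>p\<in>supp f. f p * coeff_sum (D p))"
proof -
  have comp: "lin_ext (\<lambda>_ _. 1) (lin_ext D f) = lin_ext (\<lambda>p. lin_ext (\<lambda>_ _. 1) (D p)) f"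
    using assms by (rule lin_ext_comp)
  show ?thesis unfolding coeff_sum_as_lin_ext comp by (simp add: lin_ext_def)
qed

lemma sum_antisym_pairs_eq_0:
  fixes F :: "'b \<Rightarrow> 'b \<Rightarrow> int"
  assumes "finite C" "\<And>x y. x \<in> C \<Longrightarrow> y \<in> C \<Longrightarrow> x \<noteq> y \<Longrightarrow> F y x = - F x y"
  shows "(\<Sum>x\<in>C. \<Sum>y\<in>C - {x}. F x y) = 0"
proof -
  let ?G = "\<lambda>x y. if y \<noteq> x then F x y else 0"
  have e: "(\<Sum>x\<in>C. \<Sum>y\<in>C - {x}. F x y) = (\<Sum>x\<in>C. \<Sum>y\<in>C. ?G x y)"
  proof (rule sum.cong[OF refl])
    fix x assume "x \<in> C"
    show "(\<Sum>y\<in>C - {x}. F x y) = (\<Sum>y\<in>C. ?G x y)"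
    proof -
      have "C \<inter> {y. y \<noteq> x} = C - {x}" by blast
      then show ?thesis using assms(1) by (simp add: sum.If_cases)
    qed
  qed
  have "(\<Sum>x\<in>C. \<Sum>y\<in>C. ?G x y) = (\<Sum>y\<in>C. \<Sum>x\<in>C. ?G x y)" by (rule sum.swap)
  also have "\<dots> = (\<Sum>y\<in>C. \<Sum>x\<in>C. - ?G y x)"
  proof (intro sum.cong refl)
    fix y x assume yx: "y \<in> C" "x \<in> C"
    show "?G x y = - ?G y x"
    proof (cases "x = y")
      case True then show ?thesis by simp
    next
      case False
      have "F x y = - F y x" using assms(2)[OF yx False[symmetric]] .
      then show ?thesis using False by simp
    qed
  qed
  also have "\<dots> = - (\<Sum>y\<in>C. \<Sum>x\<in>C. ?G y x)" by (simp add: sum_negf)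
  finally show ?thesis using e by linarith
qed

section \<open>Trace equivalence of words\<close>

definition remove_last :: "'a \<Rightarrow> 'a list \<Rightarrow> 'a list" where
  "remove_last a xs = rev (remove1 a (rev xs))"

lemma remove_last_snoc_same[simp]: "remove_last a (xs @ [a]) = xs"
  by (simp add: remove_last_def)
lemma remove_last_snoc_other: "b \<noteq> a \<Longrightarrow> remove_last a (xs @ [b]) = remove_last a xs @ [b]"
  by (simp add: remove_last_def)
lemma remove_last_append_in: "a \<in> set ys \<Longrightarrow> remove_last a (xs @ ys) = xs @ remove_last a ys"
  by (simp add: remove_last_def remove1_append)
lemma remove_last_append_notin: "a \<notin> set ys \<Longrightarrow> remove_last a (xs @ ys) = remove_last a xs @ ys"
  by (simp add: remove_last_def remove1_append)
lemma length_remove_last: "a \<in> set xs \<Longrightarrow> length (remove_last a xs) = length xs - 1"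
  by (simp add: remove_last_def length_remove1)

lemma tstep_append_context: "(u, v) \<in> tstep I \<Longrightarrow> (p @ u @ q, p @ v @ q) \<in> tstep I"
proof -
  assume "(u, v) \<in> tstep I"
  then obtain u0 v0 a b where "u = u0 @ [a, b] @ v0" "v = u0 @ [b, a] @ v0" "(a, b) \<in> I"
    unfolding tstep_def by blast
  then show ?thesis unfolding tstep_def
    by (intro CollectI exI[of _ "p @ u0"] exI[of _ "v0 @ q"] exI[of _ a] exI[of _ b]) simp
qed

lemma tr_eq_refl[simp]: "(u, u) \<in> tr_eq I"
  by (simp add: tr_eq_def)

lemma tr_eq_sym: "(u, v) \<in> tr_eq I \<Longrightarrow> (v, u) \<in> tr_eq I"
proof -
  have "sym (tstep I \<union> (tstep I)\<inverse>)" by (auto simp: sym_def)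
  then show "(u, v) \<in> tr_eq I \<Longrightarrow> (v, u) \<in> tr_eq I"
    unfolding tr_eq_def by (meson sym_rtrancl symD)
qed

lemma tr_eq_trans: "(u, v) \<in> tr_eq I \<Longrightarrow> (v, w) \<in> tr_eq I \<Longrightarrow> (u, w) \<in> tr_eq I"
  unfolding tr_eq_def by (rule rtrancl_trans)

lemma tr_eq_step: "(u, v) \<in> tstep I \<Longrightarrow> (u, v) \<in> tr_eq I"
  unfolding tr_eq_def by auto

lemma tr_eq_swap: "(a, b) \<in> I \<Longrightarrow> (p @ [a, b] @ q, p @ [b, a] @ q) \<in> tr_eq I"
  by (rule tr_eq_step) (auto simp: tstep_def)

lemma tr_eq_induct[consumes 1, case_names refl step]:
  assumes "(u, v) \<in> tr_eq I"
    and "P u"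
    and "\<And>x y. P x \<Longrightarrow> (x, y) \<in> tstep I \<or> (y, x) \<in> tstep I \<Longrightarrow> P y"
  shows "P v"
  using assms(1) unfolding tr_eq_def
proof (induction rule: rtrancl_induct)
  case base then show ?case using assms(2) by simp
next
  case (step y z) then show ?case using assms(3) by blast
qed

lemma tr_eq_append_context: "(u, v) \<in> tr_eq I \<Longrightarrow> (p @ u @ q, p @ v @ q) \<in> tr_eq I"
proof (induction rule: tr_eq_induct)
  case refl then show ?case by simp
next
  case (step x y)
  then have "(p @ x @ q, p @ y @ q) \<in> tstep I \<or> (p @ y @ q, p @ x @ q) \<in> tstep I"
    using tstep_append_context by blast
  then have "(p @ x @ q, p @ y @ q) \<in> tr_eq I"
    using tr_eq_step tr_eq_sym by blast
  then show ?case using step.IH tr_eq_trans by blast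
qed

lemma tr_eq_append: "(u, u') \<in> tr_eq I \<Longrightarrow> (v, v') \<in> tr_eq I \<Longrightarrow> (u @ v, u' @ v') \<in> tr_eq I"
  using tr_eq_append_context[of u u' I "[]" v] tr_eq_append_context[of v v' I u' "[]"] tr_eq_trans
  by auto

lemma tr_eq_invariant:
  assumes "(u, v) \<in> tr_eq I" "\<And>x y. (x, y) \<in> tstep I \<Longrightarrow> F x = F y"
  shows "F u = F v"
  using assms(1) by (induction rule: tr_eq_induct) (use assms(2) in auto)

lemma tstep_length: "(x, y) \<in> tstep I \<Longrightarrow> length x = length y"
  unfolding tstep_def by auto
lemma tstep_set: "(x, y) \<in> tstep I \<Longrightarrow> set x = set y"
  unfolding tstep_def by auto

lemma tr_eq_length: "(u, v) \<in> tr_eq I \<Longrightarrow> length u = length v"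
  by (rule tr_eq_invariant) (auto dest: tstep_length)
lemma tr_eq_set: "(u, v) \<in> tr_eq I \<Longrightarrow> set u = set v"
  by (rule tr_eq_invariant) (auto dest: tstep_set)

lemma remove_last_tstep:
  assumes "(u, v) \<in> tstep I"
  shows "(remove_last a u, remove_last a v) \<in> tr_eq I"
proof -
  obtain p q x y where uv: "u = p @ [x, y] @ q" "v = p @ [y, x] @ q" "(x, y) \<in> I"
    using assms unfolding tstep_def by blast
  show ?thesis
  proof (cases "a \<in> set q")
    case True
    have "remove_last a u = (p @ [x, y]) @ remove_last a q" unfolding uv(1)
      using remove_last_append_in[OF True, of "p @ [x, y]"] by simp
    moreover have "remove_last a v = (p @ [y, x]) @ remove_last a q" unfolding uv(2)
      using remove_last_append_in[OF True, of "p @ [y, x]"] by simp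
    ultimately show ?thesis using tr_eq_swap[OF uv(3), of p "remove_last a q"] by simp
  next
    case False
    have ru: "remove_last a u = remove_last a (p @ [x, y]) @ q" unfolding uv(1)
      using remove_last_append_notin[OF False, of "p @ [x, y]"] by simp
    have rv: "remove_last a v = remove_last a (p @ [y, x]) @ q" unfolding uv(2)
      using remove_last_append_notin[OF False, of "p @ [y, x]"] by simp
    show ?thesis
    proof (cases "a = x \<or> a = y")
      case True
      then have "remove_last a (p @ [x, y]) = remove_last a (p @ [y, x])"
        by (auto simp: remove_last_def)
      then show ?thesis using ru rv by simp
    next
      case False
      then have "remove_last a (p @ [x, y]) = remove_last a p @ [x, y]"
        and "remove_last a (p @ [y, x]) = remove_last a p @ [y, x]"
        by (simp_all add: remove_last_append_notin)
      then show ?thesis using ru rv tr_eq_swap[OF uv(3), of "remove_last a p" q] by simp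
    qed
  qed
qed

lemma remove_last_tr_eq: "(u, v) \<in> tr_eq I \<Longrightarrow> (remove_last a u, remove_last a v) \<in> tr_eq I"
proof (induction rule: tr_eq_induct)
  case refl then show ?case by simp
next
  case (step x y)
  from \<open>(x, y) \<in> tstep I \<or> (y, x) \<in> tstep I\<close>
  have "(remove_last a x, remove_last a y) \<in> tr_eq I"
  proof
    assume "(x, y) \<in> tstep I" then show ?thesis by (rule remove_last_tstep)
  next
    assume "(y, x) \<in> tstep I" from remove_last_tstep[OF this, of a] show ?thesis by (rule tr_eq_sym)
  qed
  with step.IH show ?case by (rule tr_eq_trans)
qed

lemma tr_eq_cancel_snoc: "(u @ [a], v @ [a]) \<in> tr_eq I \<Longrightarrow> (u, v) \<in> tr_eq I"
proof -
  assume "(u @ [a], v @ [a]) \<in> tr_eq I"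
  from remove_last_tr_eq[OF this, of a] show ?thesis by simp
qed

definition proj_pair :: "'a \<Rightarrow> 'a \<Rightarrow> 'a list \<Rightarrow> 'a list" where
  "proj_pair a b w = filter (\<lambda>x. x = a \<or> x = b) w"

lemma proj_pair_tr_eq:
  assumes "sym I" "irrefl I" "(a, b) \<notin> I" "(u, v) \<in> tr_eq I"
  shows "proj_pair a b u = proj_pair a b v"
  using assms(4)
proof (rule tr_eq_invariant)
  fix x y assume "(x, y) \<in> tstep I"
  then obtain p q c d where xy: "x = p @ [c, d] @ q" "y = p @ [d, c] @ q" "(c, d) \<in> I"
    unfolding tstep_def by blast
  have "c \<noteq> d" using xy(3) assms(2) by (auto simp: irrefl_def)
  have "(b, a) \<notin> I" using assms(1,3) by (meson symD)
  then have "\<not> ((c = a \<or> c = b) \<and> (d = a \<or> d = b))"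
    using xy(3) assms(3) \<open>c \<noteq> d\<close> by blast
  then show "proj_pair a b x = proj_pair a b y"
    using xy by (auto simp: proj_pair_def)
qed

text \<open>Levi's lemma for last letters; the projection onto \<open>{a, b}\<close> shows that \<open>a\<close> and \<open>b\<close>
  commute.\<close>

lemma tr_eq_snoc_snoc:
  assumes "sym I" "irrefl I" "(u @ [b], v @ [a]) \<in> tr_eq I" "a \<noteq> b"
  shows "(a, b) \<in> I \<and> (u, remove_last a u @ [a]) \<in> tr_eq I
    \<and> (v, remove_last a u @ [b]) \<in> tr_eq I"
proof -
  have ab: "(a, b) \<in> I"
  proof (rule ccontr)
    assume "(a, b) \<notin> I"
    have "proj_pair a b (u @ [b]) = proj_pair a b (v @ [a])"
      by (rule proj_pair_tr_eq[OF assms(1,2) \<open>(a, b) \<notin> I\<close> assms(3)])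
    then have "last (proj_pair a b (u @ [b])) = last (proj_pair a b (v @ [a]))" by simp
    then show False using assms(4) by (simp add: proj_pair_def)
  qed
  have v: "(remove_last a u @ [b], v) \<in> tr_eq I"
  proof -
    have "b \<noteq> a" using assms(4) by simp
    from remove_last_tr_eq[OF assms(3), of a] show ?thesis
      by (simp add: remove_last_snoc_other[OF \<open>b \<noteq> a\<close>])
  qed
  have "(u @ [b], remove_last a u @ [b] @ [a]) \<in> tr_eq I"
    using tr_eq_trans[OF assms(3) tr_eq_append[OF tr_eq_sym[OF v] tr_eq_refl[of "[a]"]]] by simp
  moreover have "(remove_last a u @ [b, a], remove_last a u @ [a, b]) \<in> tr_eq I"
  proof -
    have "(b, a) \<in> I" using ab assms(1) by (meson symD)
    from tr_eq_swap[OF this, of "remove_last a u" "[]"] show ?thesis by simp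
  qed
  ultimately have "(u @ [b], (remove_last a u @ [a]) @ [b]) \<in> tr_eq I"
    by (simp add: tr_eq_trans)
  then have "(u, remove_last a u @ [a]) \<in> tr_eq I" by (rule tr_eq_cancel_snoc)
  then show ?thesis using ab tr_eq_sym[OF v] by blast
qed

lemma tr_eq_snoc_through_suffix:
  assumes "sym I" "irrefl I" "(u @ ws, v @ [a]) \<in> tr_eq I" "a \<notin> set ws"
  shows "\<exists>z. (u, z @ [a]) \<in> tr_eq I"
  using assms(3,4)
proof (induction ws arbitrary: v rule: rev_induct)
  case Nil then show ?case by auto
next
  case (snoc b ws)
  then have "a \<noteq> b" by simp
  from snoc.prems(1) have "((u @ ws) @ [b], v @ [a]) \<in> tr_eq I" by simp
  from tr_eq_snoc_snoc[OF assms(1,2) this \<open>a \<noteq> b\<close>]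
  have "(u @ ws, remove_last a (u @ ws) @ [a]) \<in> tr_eq I" by blast
  moreover have "a \<notin> set ws" using snoc.prems(2) by simp
  ultimately show ?case by (rule snoc.IH)
qed

lemma tr_eq_move_to_front:
  assumes "distinct xs" "\<forall>x\<in>set xs. \<forall>y\<in>set xs. x \<noteq> y \<longrightarrow> (x, y) \<in> I" "x \<in> set xs"
  shows "(xs, x # remove1 x xs) \<in> tr_eq I"
  using assms
proof (induction xs)
  case Nil then show ?case by simp
next
  case (Cons y ys)
  show ?case
  proof (cases "y = x")
    case True then show ?thesis by simp
  next
    case False
    then have x: "x \<in> set ys" using Cons.prems by simp
    have IH: "(ys, x # remove1 x ys) \<in> tr_eq I"
      by (rule Cons.IH) (use Cons.prems x in auto)
    have yx: "(y, x) \<in> I" using Cons.prems(2) x False by auto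
    have c1: "(y # ys, y # x # remove1 x ys) \<in> tr_eq I"
      using tr_eq_append_context[OF IH, of "[y]" "[]"] by simp
    have c2: "(y # x # remove1 x ys, x # y # remove1 x ys) \<in> tr_eq I"
      using tr_eq_swap[OF yx, of "[]" "remove1 x ys"] by simp
    have "remove1 x (y # ys) = y # remove1 x ys" using False by simp
    then show ?thesis using tr_eq_trans[OF c1 c2] by simp
  qed
qed

lemma tr_eq_perm:
  assumes "distinct xs" "distinct ys" "set xs = set ys"
    and "\<forall>x\<in>set xs. \<forall>y\<in>set xs. x \<noteq> y \<longrightarrow> (x, y) \<in> I"
  shows "(xs, ys) \<in> tr_eq I"
  using assms
proof (induction xs arbitrary: ys)
  case Nil then show ?case by simp
next
  case (Cons x xs)
  have xin: "x \<in> set ys" using Cons.prems(3) by auto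
  have m: "(ys, x # remove1 x ys) \<in> tr_eq I"
    by (rule tr_eq_move_to_front) (use Cons.prems xin in auto)
  have sr: "set (remove1 x ys) = set ys - {x}" using Cons.prems(2) by (simp add: set_remove1_eq)
  have "(xs, remove1 x ys) \<in> tr_eq I"
    by (rule Cons.IH) (use Cons.prems sr in auto)
  then have "(x # xs, x # remove1 x ys) \<in> tr_eq I"
    using tr_eq_append_context[of _ _ I "[x]" "[]"] by simp
  then show ?case using tr_eq_sym[OF m] by (rule tr_eq_trans)
qed

lemma in_trace: "v \<in> trace I u \<longleftrightarrow> (u, v) \<in> tr_eq I"
  by (simp add: trace_def)

lemma trace_eq_iff: "trace I u = trace I v \<longleftrightarrow> (u, v) \<in> tr_eq I"
proof
  assume "trace I u = trace I v"
  then have "v \<in> trace I u" by (simp add: in_trace)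
  then show "(u, v) \<in> tr_eq I" by (simp add: in_trace)
next
  assume uv: "(u, v) \<in> tr_eq I"
  show "trace I u = trace I v"
  proof (rule set_eqI)
    fix w
    show "w \<in> trace I u \<longleftrightarrow> w \<in> trace I v"
      unfolding in_trace using uv tr_eq_sym[OF uv] tr_eq_trans by metis
  qed
qed

definition rep :: "'a list set \<Rightarrow> 'a list" where "rep t = (SOME u. u \<in> t)"

lemma rep_trace: "(w, rep (trace I w)) \<in> tr_eq I"
proof -
  have "w \<in> trace I w" by (simp add: in_trace)
  then have "rep (trace I w) \<in> trace I w" unfolding rep_def by (rule someI)
  then show ?thesis by (simp add: in_trace)
qed

lemma trace_rep_trace[simp]: "trace I (rep (trace I w)) = trace I w"
  using rep_trace[of w I] trace_eq_iff tr_eq_sym by metis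

lemma length_rep_trace[simp]: "length (rep (trace I w)) = length w"
  using rep_trace[of w I] tr_eq_length by metis

lemma set_rep_trace[simp]: "set (rep (trace I w)) = set w"
  using rep_trace[of w I] tr_eq_set by metis

lemma tmult_rep: "tmult I x y = trace I (rep x @ rep y)"
  by (simp add: tmult_def rep_def)

lemma trace_in_tmon: "set w \<subseteq> Sig \<Longrightarrow> trace I w \<in> tmon Sig I"
  by (auto simp: tmon_def)

lemma tmon_rep:
  assumes "t \<in> tmon Sig I"
  shows "trace I (rep t) = t" "set (rep t) \<subseteq> Sig"
  using assms by (auto simp: tmon_def)

lemma rep_tmon_tr_eq: "t \<in> tmon Sig I \<Longrightarrow> (rep t, w) \<in> tr_eq I \<longleftrightarrow> trace I w = t"
  using tmon_rep(1)[of t Sig I] trace_eq_iff by metis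

lemma free_mod_iff: "f \<in> free_mod Sig I J \<longleftrightarrow> finite (supp f) \<and> supp f \<subseteq> J \<times> tmon Sig I"
  by (auto simp: free_mod_def supp_def)

section \<open>The clique complex\<close>

text \<open>The injection \<open>idx\<close> orders the alphabet, which fixes the signs of the boundary, and
  codes cliques as natural numbers, the index type of the bases in \<open>free_mod\<close>.\<close>

locale trace_monoid =
  fixes Sig :: "'a set" and I :: "('a \<times> 'a) set" and idx :: "'a \<Rightarrow> nat"
  assumes finite_Sig: "finite Sig" and sym_I: "sym I" and irrefl_I: "irrefl I"
    and inj_idx: "inj_on idx Sig"
begin

definition clique :: "'a set \<Rightarrow> bool" where
  "clique C \<longleftrightarrow> C \<subseteq> Sig \<and> (\<forall>a\<in>C. \<forall>b\<in>C. a \<noteq> b \<longrightarrow> (a, b) \<in> I)"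

definition enc :: "'a set \<Rightarrow> nat" where
  "enc C = set_encode (idx ` C)"

definition dec :: "nat \<Rightarrow> 'a set" where
  "dec j = (SOME C. C \<subseteq> Sig \<and> enc C = j)"

definition clique_codes :: "nat \<Rightarrow> nat set" where
  "clique_codes k = enc ` {C. clique C \<and> card C = k}"

text \<open>The basis element \<open>(enc C, m)\<close> of the degree-\<open>k\<close> module stands for \<open>m[C]\<close>.\<close>

definition cells :: "nat \<Rightarrow> (nat \<times> 'a list set) set" where
  "cells k = clique_codes k \<times> tmon Sig I"

definition mul_letter :: "'a list set \<Rightarrow> 'a \<Rightarrow> 'a list set" where
  "mul_letter m x = trace I (rep m @ [x])"

definition div_letter :: "'a list set \<Rightarrow> 'a \<Rightarrow> 'a list set" where
  "div_letter m a = trace I (remove_last a (rep m))"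

definition clique_word :: "'a set \<Rightarrow> 'a list" where
  "clique_word C = (SOME w. distinct w \<and> set w = C)"

definition mul_clique :: "'a set \<Rightarrow> 'a list set \<Rightarrow> 'a list set" where
  "mul_clique C m = trace I (rep m @ clique_word C)"

definition last_letters :: "'a list set \<Rightarrow> 'a set" where
  "last_letters t = {a. \<exists>w. (rep t, w @ [a]) \<in> tr_eq I}"

definition pick_last :: "'a list set \<Rightarrow> 'a" where
  "pick_last t = (SOME a. a \<in> last_letters t)"

definition face_sign :: "'a \<Rightarrow> 'a set \<Rightarrow> int" where
  "face_sign x C = (-1) ^ card {y\<in>C. idx y < idx x}"

definition level :: "nat \<times> 'a list set \<Rightarrow> nat" where
  "level p = length (rep (snd p))"

lemma finite_clique: "clique C \<Longrightarrow> finite C"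
  using finite_Sig by (auto simp: clique_def intro: finite_subset)

lemma clique_subset: "clique C \<Longrightarrow> C' \<subseteq> C \<Longrightarrow> clique C'"
  by (auto simp: clique_def)

lemma clique_subset_Sig: "clique C \<Longrightarrow> C \<subseteq> Sig"
  by (simp add: clique_def)

lemma clique_empty: "clique {}"
  by (simp add: clique_def)

lemma enc_eq_iff:
  assumes "C \<subseteq> Sig" "C' \<subseteq> Sig"
  shows "enc C = enc C' \<longleftrightarrow> C = C'"
proof -
  have "finite (idx ` C)" "finite (idx ` C')"
    using assms finite_Sig by (auto intro: finite_subset)
  then have "enc C = enc C' \<longleftrightarrow> idx ` C = idx ` C'"
    unfolding enc_def by (simp add: set_encode_eq)
  also have "\<dots> \<longleftrightarrow> C = C'" using assms inj_idx by (simp add: inj_on_image_eq_iff)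
  finally show ?thesis .
qed

lemma dec_enc[simp]: "C \<subseteq> Sig \<Longrightarrow> dec (enc C) = C"
proof -
  assume C: "C \<subseteq> Sig"
  have "dec (enc C) \<subseteq> Sig \<and> enc (dec (enc C)) = enc C"
    unfolding dec_def by (rule someI[of _ C]) (use C in simp)
  then show ?thesis using enc_eq_iff C by blast
qed

lemma cellsE:
  assumes "p \<in> cells k"
  obtains C m where "p = (enc C, m)" "clique C" "card C = k" "m \<in> tmon Sig I"
  using assms by (auto simp: cells_def clique_codes_def)

lemma in_cellsI: "clique C \<Longrightarrow> card C = k \<Longrightarrow> m \<in> tmon Sig I \<Longrightarrow> (enc C, m) \<in> cells k"
  by (auto simp: cells_def clique_codes_def)

lemma face_in_cells:
  assumes "clique C" "card C = k" "x \<in> C" "m \<in> tmon Sig I"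
  shows "(enc (C - {x}), m) \<in> cells (k - 1)"
  using assms finite_clique[OF assms(1)] by (intro in_cellsI) (auto intro: clique_subset)

lemma clique_word_spec: "finite C \<Longrightarrow> distinct (clique_word C) \<and> set (clique_word C) = C"
  unfolding clique_word_def by (metis (mono_tags, lifting) finite_distinct_list someI_ex)

lemma tr_eq_clique_words:
  assumes "clique C" "distinct w1" "distinct w2" "set w1 = C" "set w2 = C"
  shows "(w1, w2) \<in> tr_eq I"
  by (rule tr_eq_perm) (use assms in \<open>auto simp: clique_def\<close>)

lemma rep_mul_letter: "(rep m @ [x], rep (mul_letter m x)) \<in> tr_eq I"
  unfolding mul_letter_def by (rule rep_trace)

lemma mul_letter_in_tmon: "m \<in> tmon Sig I \<Longrightarrow> x \<in> Sig \<Longrightarrow> mul_letter m x \<in> tmon Sig I"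
  unfolding mul_letter_def by (rule trace_in_tmon) (use tmon_rep(2) in auto)

lemma div_letter_in_tmon: "m \<in> tmon Sig I \<Longrightarrow> div_letter m a \<in> tmon Sig I"
  unfolding div_letter_def remove_last_def
  by (rule trace_in_tmon)
    (use tmon_rep(2)[of m Sig I] set_remove1_subset[of a "rev (rep m)"] in auto)

lemma length_rep_mul_letter: "length (rep (mul_letter m x)) = length (rep m) + 1"
  by (simp add: mul_letter_def)

lemma length_rep_div_letter:
  "a \<in> set (rep m) \<Longrightarrow> length (rep (div_letter m a)) = length (rep m) - 1"
  by (simp add: div_letter_def length_remove_last)

lemma mul_letter_commute:
  assumes "(x, y) \<in> I"
  shows "mul_letter (mul_letter m x) y = mul_letter (mul_letter m y) x"
proof -
  have "(rep (mul_letter m x) @ [y], rep m @ [x, y]) \<in> tr_eq I"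
    using tr_eq_append[OF tr_eq_sym[OF rep_mul_letter] tr_eq_refl[of "[y]"]] by simp
  moreover have "(rep m @ [x, y], rep m @ [y, x]) \<in> tr_eq I"
    using tr_eq_swap[OF assms, of "rep m" "[]"] by simp
  moreover have "(rep m @ [y, x], rep (mul_letter m y) @ [x]) \<in> tr_eq I"
    using tr_eq_append[OF rep_mul_letter tr_eq_refl[of "[x]"]] by simp
  ultimately show ?thesis
    unfolding mul_letter_def[of "mul_letter m x"] mul_letter_def[of "mul_letter m y"] trace_eq_iff
    by (meson tr_eq_trans)
qed

lemma tmult_mul_letter: "tmult I m' (mul_letter m x) = mul_letter (tmult I m' m) x"
proof -
  have "(rep m' @ rep (mul_letter m x), rep m' @ rep m @ [x]) \<in> tr_eq I"
    using tr_eq_append_context[OF tr_eq_sym[OF rep_mul_letter], where p = "rep m'" and q = "[]"] by simp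
  moreover have "(rep m' @ rep m @ [x], rep (tmult I m' m) @ [x]) \<in> tr_eq I"
  proof -
    have r: "(rep m' @ rep m, rep (tmult I m' m)) \<in> tr_eq I" unfolding tmult_rep by (rule rep_trace)
    show ?thesis using tr_eq_append[OF r tr_eq_refl] by simp
  qed
  ultimately show ?thesis
    unfolding tmult_rep[where x=m' and y="mul_letter m x"] mul_letter_def[of "tmult I m' m"]
      trace_eq_iff
    by (rule tr_eq_trans)
qed

lemma mul_letter_div_letter:
  assumes "m \<in> tmon Sig I" "(rep m, w @ [a]) \<in> tr_eq I"
  shows "mul_letter (div_letter m a) a = m"
proof -
  have "(remove_last a (rep m), w) \<in> tr_eq I" using remove_last_tr_eq[OF assms(2), of a] by simp
  have "(rep (div_letter m a) @ [a], remove_last a (rep m) @ [a]) \<in> tr_eq I"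
    unfolding div_letter_def by (rule tr_eq_append[OF tr_eq_sym[OF rep_trace] tr_eq_refl])
  moreover have "(remove_last a (rep m) @ [a], w @ [a]) \<in> tr_eq I"
    by (rule tr_eq_append[OF \<open>(remove_last a (rep m), w) \<in> tr_eq I\<close> tr_eq_refl])
  ultimately have "(rep m, rep (div_letter m a) @ [a]) \<in> tr_eq I"
    using assms(2) by (meson tr_eq_trans tr_eq_sym)
  then show ?thesis unfolding mul_letter_def using rep_tmon_tr_eq[OF assms(1)] by simp
qed

lemma div_letter_mul_letter_same:
  assumes "m \<in> tmon Sig I"
  shows "div_letter (mul_letter m a) a = m"
proof -
  have "(remove_last a (rep (mul_letter m a)), remove_last a (rep m @ [a])) \<in> tr_eq I"
    by (rule remove_last_tr_eq[OF tr_eq_sym[OF rep_mul_letter]])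
  then show ?thesis unfolding div_letter_def[of "mul_letter m a"] using rep_tmon_tr_eq[OF assms]
    by (metis remove_last_snoc_same tr_eq_sym)
qed

lemma div_letter_mul_letter_other:
  assumes "y \<noteq> a"
  shows "div_letter (mul_letter m y) a = mul_letter (div_letter m a) y"
proof -
  have "(remove_last a (rep (mul_letter m y)), remove_last a (rep m @ [y])) \<in> tr_eq I"
    by (rule remove_last_tr_eq[OF tr_eq_sym[OF rep_mul_letter]])
  then have 1: "(remove_last a (rep (mul_letter m y)), remove_last a (rep m) @ [y]) \<in> tr_eq I"
    using remove_last_snoc_other[OF assms] by simp
  have 2: "(rep (div_letter m a) @ [y], remove_last a (rep m) @ [y]) \<in> tr_eq I"
    unfolding div_letter_def by (rule tr_eq_append[OF tr_eq_sym[OF rep_trace] tr_eq_refl])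
  show ?thesis unfolding div_letter_def[of "mul_letter m y"] mul_letter_def[of "div_letter m a"] trace_eq_iff
    using 1 2 by (meson tr_eq_trans tr_eq_sym)
qed

lemma mul_clique_face:
  assumes "clique C" "x \<in> C"
  shows "mul_clique (C - {x}) (mul_letter m x) = mul_clique C m"
proof -
  have fC: "finite C" using assms finite_clique by blast
  have cw1: "distinct (clique_word (C - {x}))" "set (clique_word (C - {x})) = C - {x}"
    using clique_word_spec[of "C - {x}"] fC by auto
  have cw2: "distinct (clique_word C)" "set (clique_word C) = C" using clique_word_spec[of C] fC by auto
  have p: "(x # clique_word (C - {x}), clique_word C) \<in> tr_eq I"
    by (rule tr_eq_clique_words[OF assms(1)]) (use cw1 cw2 assms(2) in auto)
  have "(rep (mul_letter m x) @ clique_word (C - {x}), rep m @ [x] @ clique_word (C - {x})) \<in> tr_eq I"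
    using tr_eq_append[OF tr_eq_sym[OF rep_mul_letter] tr_eq_refl] by simp
  moreover have "(rep m @ [x] @ clique_word (C - {x}), rep m @ clique_word C) \<in> tr_eq I"
    using tr_eq_append_context[OF p, of "rep m" "[]"] by simp
  ultimately show ?thesis unfolding mul_clique_def trace_eq_iff by (rule tr_eq_trans)
qed

lemma length_rep_mul_clique:
  "finite C \<Longrightarrow> length (rep (mul_clique C m)) = length (rep m) + card C"
  using clique_word_spec[of C] by (simp add: mul_clique_def) (metis distinct_card)

text \<open>A last letter \<open>a \<notin> C\<close> of \<open>m w\<^sub>C\<close> commutes with every letter of \<open>C\<close>
  (by \<open>tr_eq_snoc_snoc\<close>, since the letters of \<open>C\<close> can be moved to the end in any order),
  so it extends \<open>C\<close> to a clique and is already a last letter of \<open>m\<close>.\<close>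

lemma pick_last_extends_clique:
  assumes "clique C" "m \<in> tmon Sig I" "rep (mul_clique C m) \<noteq> []"
    and "pick_last (mul_clique C m) \<notin> C"
  shows "clique (insert (pick_last (mul_clique C m)) C)"
    and "\<exists>w. (rep m, w @ [pick_last (mul_clique C m)]) \<in> tr_eq I"
proof -
  let ?t = "mul_clique C m"
  let ?a = "pick_last ?t"
  have cw: "distinct (clique_word C)" "set (clique_word C) = C"
    using clique_word_spec[of C] finite_clique[OF assms(1)] by auto
  have "last (rep ?t) \<in> last_letters ?t"
    unfolding last_letters_def using assms(3) by (intro CollectI exI[of _ "butlast (rep ?t)"]) simp
  then have "?a \<in> last_letters ?t" unfolding pick_last_def by (rule someI)
  then obtain w where w: "(rep ?t, w @ [?a]) \<in> tr_eq I" unfolding last_letters_def by blast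
  have "(rep m @ clique_word C, rep ?t) \<in> tr_eq I" unfolding mul_clique_def by (rule rep_trace)
  from tr_eq_trans[OF this w] have mw: "(rep m @ clique_word C, w @ [?a]) \<in> tr_eq I" .
  have "set (rep m @ clique_word C) \<subseteq> Sig"
    using tmon_rep(2)[OF assms(2)] cw assms(1) by (auto simp: clique_def)
  then have a_Sig: "?a \<in> Sig" using tr_eq_set[OF mw] by auto
  show "\<exists>w. (rep m, w @ [?a]) \<in> tr_eq I"
    by (rule tr_eq_snoc_through_suffix[OF sym_I irrefl_I mw]) (use cw assms(4) in simp)
  have "(?a, c) \<in> I" if c: "c \<in> C" for c
  proof -
    have "(clique_word C, remove1 c (clique_word C) @ [c]) \<in> tr_eq I"
      by (rule tr_eq_clique_words[OF assms(1)]) (use cw c in \<open>auto simp: set_remove1_eq\<close>)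
    from tr_eq_append_context[OF tr_eq_sym[OF this], of "rep m" "[]"]
    have "((rep m @ remove1 c (clique_word C)) @ [c], w @ [?a]) \<in> tr_eq I"
      using tr_eq_trans mw by fastforce
    moreover have "?a \<noteq> c" using assms(4) c by blast
    ultimately show "(?a, c) \<in> I" using tr_eq_snoc_snoc[OF sym_I irrefl_I] by blast
  qed
  then show "clique (insert ?a C)" using assms(1) a_Sig sym_I
    by (auto simp: clique_def dest: symD)
qed
lemma face_sign_square[simp]: "face_sign x C * face_sign x C = 1"
  by (simp add: face_sign_def flip: power_add mult_2)

lemma face_sign_swap_less:
  assumes "finite C" "x \<in> C" "y \<in> C" "idx x < idx y"
  shows "face_sign x C * face_sign y (C - {x}) = - (face_sign y C * face_sign x (C - {y}))"
proof -
  let ?A = "{z\<in>C. idx z < idx y}"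
  have fA: "finite ?A" using assms by simp
  have xA: "x \<in> ?A" using assms by simp
  have "{z\<in>C - {x}. idx z < idx y} = ?A - {x}" by auto
  then have c1: "card {z\<in>C - {x}. idx z < idx y} = card ?A - 1" using fA xA by simp
  have pos: "card ?A \<ge> 1" using fA xA by (metis One_nat_def Suc_leI card_gt_0_iff empty_iff)
  have "{z\<in>C - {y}. idx z < idx x} = {z\<in>C. idx z < idx x}" using assms(4) by auto
  then have s2: "face_sign x (C - {y}) = face_sign x C" by (simp add: face_sign_def)
  have s1: "face_sign y C = - face_sign y (C - {x})"
  proof -
    obtain n where n: "card ?A = Suc n" using pos by (metis Suc_le_D One_nat_def)
    show ?thesis unfolding face_sign_def c1 n by simp
  qed
  show ?thesis unfolding s2 s1 by simp
qed

lemma face_sign_swap: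
  assumes "C \<subseteq> Sig" "x \<in> C" "y \<in> C" "x \<noteq> y"
  shows "face_sign x C * face_sign y (C - {x}) = - (face_sign y C * face_sign x (C - {y}))"
proof -
  have fC: "finite C" using assms finite_Sig by (auto intro: finite_subset)
  have "idx x \<noteq> idx y" using assms inj_idx by (meson inj_onD subsetD)
  then consider "idx x < idx y" | "idx y < idx x" by linarith
  then show ?thesis
  proof cases
    case 1 then show ?thesis using face_sign_swap_less fC assms by blast
  next
    case 2
    from face_sign_swap_less[OF fC assms(3) assms(2) 2] show ?thesis by linarith
  qed
qed

lemma face_sign_insert_cancel:
  assumes "insert a C \<subseteq> Sig" "a \<notin> C" "y \<in> C"
  shows "face_sign a (insert a C) * face_sign y (insert a C)
    + face_sign y C * face_sign a (insert a C - {y}) = 0"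
proof -
  let ?s = "face_sign a (insert a C)" and ?t = "face_sign y (insert a C)"
    and ?u = "face_sign y C" and ?v = "face_sign a (insert a C - {y})"
  have "insert a C - {a} = C" using assms(2) by simp
  then have swap: "?s * ?u = - (?t * ?v)"
    using assms face_sign_swap[OF assms(1), of a y] by auto
  have "?u * ?v = ?u * ?v * (?s * ?s)" by simp
  also have "\<dots> = (?s * ?u) * ?v * ?s" by (simp only: mult_ac)
  also have "\<dots> = - (?s * ?t * (?v * ?v))" unfolding swap by (simp add: mult_ac)
  finally show ?thesis by simp
qed

text \<open>\<open>bdry_mul\<close> is the length-raising half \<open>\<partial>\<^sub>+\<close> of the boundary \<open>\<partial> = bdry\<close>.\<close>

definition bdry_mul :: "nat \<times> 'a list set \<Rightarrow> nat \<times> 'a list set \<Rightarrow> int" where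
  "bdry_mul p = (\<lambda>q. \<Sum>x\<in>dec (fst p).
     face_sign x (dec (fst p)) * delta (enc (dec (fst p) - {x}), mul_letter (snd p) x) q)"

definition bdry_id :: "nat \<times> 'a list set \<Rightarrow> nat \<times> 'a list set \<Rightarrow> int" where
  "bdry_id p = (\<lambda>q. \<Sum>x\<in>dec (fst p).
     face_sign x (dec (fst p)) * delta (enc (dec (fst p) - {x}), snd p) q)"

definition bdry :: "nat \<times> 'a list set \<Rightarrow> nat \<times> 'a list set \<Rightarrow> int" where
  "bdry p = (\<lambda>q. bdry_mul p q - bdry_id p q)"

text \<open>The homotopy \<open>h\<close> moves the chosen last letter \<open>a\<close> of \<open>m w\<^sub>C\<close> from \<open>m\<close> into the
  clique, and is zero if \<open>a \<in> C\<close> or \<open>m w\<^sub>C = 1\<close>.\<close>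

definition cone :: "nat \<times> 'a list set \<Rightarrow> nat \<times> 'a list set \<Rightarrow> int" where
  "cone p = (let C = dec (fst p); m = snd p; a = pick_last (mul_clique C m) in
     if rep (mul_clique C m) = [] \<or> a \<in> C then (\<lambda>q. 0)
     else (\<lambda>q. face_sign a (insert a C) * delta (enc (insert a C), div_letter m a) q))"

definition act_basis :: "'a list set \<Rightarrow> nat \<times> 'a list set \<Rightarrow> nat \<times> 'a list set \<Rightarrow> int" where
  "act_basis m' p = delta (fst p, tmult I m' (snd p))"

lemma bdry_mul_enc:
  "C \<subseteq> Sig \<Longrightarrow>
    bdry_mul (enc C, m) = (\<lambda>q. \<Sum>x\<in>C. face_sign x C * delta (enc (C - {x}), mul_letter m x) q)"
  by (simp add: bdry_mul_def)

lemma bdry_id_enc: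
  "C \<subseteq> Sig \<Longrightarrow> bdry_id (enc C, m) = (\<lambda>q. \<Sum>x\<in>C. face_sign x C * delta (enc (C - {x}), m) q)"
  by (simp add: bdry_id_def)

lemma bdry_enc:
  "C \<subseteq> Sig \<Longrightarrow> bdry (enc C, m) q =
    (\<Sum>x\<in>C. face_sign x C * (delta (enc (C - {x}), mul_letter m x) q - delta (enc (C - {x}), m) q))"
  by (simp add: bdry_def bdry_mul_enc bdry_id_enc right_diff_distrib sum_subtractf)

lemma cone_enc:
  "C \<subseteq> Sig \<Longrightarrow> cone (enc C, m) = (let a = pick_last (mul_clique C m) in
     if rep (mul_clique C m) = [] \<or> a \<in> C then (\<lambda>q. 0)
     else (\<lambda>q. face_sign a (insert a C) * delta (enc (insert a C), div_letter m a) q))"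
  by (simp add: cone_def)

lemma supp_bdry_mul:
  assumes "p \<in> cells k"
  shows "finite (supp (bdry_mul p))" "supp (bdry_mul p) \<subseteq> cells (k - 1)"
proof -
  obtain C m where p: "p = (enc C, m)" "clique C" "card C = k" "m \<in> tmon Sig I"
    using assms(1) by (rule cellsE)
  have fC: "finite C" using p finite_clique by blast
  show "finite (supp (bdry_mul p))" unfolding p(1) bdry_mul_enc[OF clique_subset_Sig[OF p(2)]]
    using fC by (rule finite_supp_sum_delta)
  have "supp (bdry_mul p) \<subseteq> (\<lambda>x. (enc (C - {x}), mul_letter m x)) ` C"
    unfolding p(1) bdry_mul_enc[OF clique_subset_Sig[OF p(2)]] by (rule supp_sum_delta)
  also have "\<dots> \<subseteq> cells (k - 1)"
  proof (rule image_subsetI)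
    fix x assume x: "x \<in> C"
    then have "x \<in> Sig" using clique_subset_Sig[OF p(2)] by blast
    then show "(enc (C - {x}), mul_letter m x) \<in> cells (k - 1)"
      using face_in_cells[OF p(2,3) x mul_letter_in_tmon[OF p(4)]] by simp
  qed
  finally show "supp (bdry_mul p) \<subseteq> cells (k - 1)" .
qed

lemma supp_bdry_id:
  assumes "p \<in> cells k"
  shows "finite (supp (bdry_id p))" "supp (bdry_id p) \<subseteq> cells (k - 1)"
proof -
  obtain C m where p: "p = (enc C, m)" "clique C" "card C = k" "m \<in> tmon Sig I"
    using assms(1) by (rule cellsE)
  have fC: "finite C" using p finite_clique by blast
  show "finite (supp (bdry_id p))" unfolding p(1) bdry_id_enc[OF clique_subset_Sig[OF p(2)]]
    using fC by (rule finite_supp_sum_delta)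
  have "supp (bdry_id p) \<subseteq> (\<lambda>x. (enc (C - {x}), m)) ` C"
    unfolding p(1) bdry_id_enc[OF clique_subset_Sig[OF p(2)]] by (rule supp_sum_delta)
  also have "\<dots> \<subseteq> cells (k - 1)"
    using face_in_cells[OF p(2,3) _ p(4)] by blast
  finally show "supp (bdry_id p) \<subseteq> cells (k - 1)" .
qed

lemma supp_bdry:
  assumes "p \<in> cells k"
  shows "finite (supp (bdry p))" "supp (bdry p) \<subseteq> cells (k - 1)"
  using supp_diff[of "bdry_mul p" "bdry_id p"] supp_bdry_mul[OF assms] supp_bdry_id[OF assms]
  unfolding bdry_def[of p, symmetric] by (auto intro: finite_subset)

lemma supp_cone:
  assumes "p \<in> cells k"
  shows "finite (supp (cone p))" "supp (cone p) \<subseteq> cells (Suc k)"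
proof -
  obtain C m where p: "p = (enc C, m)" "clique C" "card C = k" "m \<in> tmon Sig I"
    using assms(1) by (rule cellsE)
  let ?a = "pick_last (mul_clique C m)"
  show "finite (supp (cone p))"
    unfolding p(1) cone_enc[OF clique_subset_Sig[OF p(2)]] Let_def
    by (auto simp: supp_def delta_def)
  show "supp (cone p) \<subseteq> cells (Suc k)"
  proof (cases "rep (mul_clique C m) = [] \<or> ?a \<in> C")
    case True
    then show ?thesis unfolding p(1) cone_enc[OF clique_subset_Sig[OF p(2)]] Let_def by simp
  next
    case False
    then have ne: "rep (mul_clique C m) \<noteq> []" and aC: "?a \<notin> C" by auto
    have "clique (insert ?a C)" using pick_last_extends_clique(1)[OF p(2,4) ne aC] .
    moreover have "card (insert ?a C) = Suc k" using aC p(3) finite_clique[OF p(2)] by simp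
    ultimately have "(enc (insert ?a C), div_letter m ?a) \<in> cells (Suc k)"
      using div_letter_in_tmon[OF p(4)] by (rule in_cellsI)
    then show ?thesis unfolding p(1) cone_enc[OF clique_subset_Sig[OF p(2)]] Let_def using False
      by (auto simp: supp_def delta_def split: if_splits)
  qed
qed

lemma level_bdry_mul:
  assumes "p \<in> cells k" "q \<in> supp (bdry_mul p)"
  shows "level q = Suc (level p)"
proof -
  obtain C m where p: "p = (enc C, m)" "clique C" "card C = k" "m \<in> tmon Sig I"
    using assms(1) by (rule cellsE)
  have "q \<in> supp (\<lambda>q. \<Sum>x\<in>C. face_sign x C * delta (enc (C - {x}), mul_letter m x) q)"
    using assms(2) unfolding p(1) bdry_mul_enc[OF clique_subset_Sig[OF p(2)]] .
  then have "q \<in> (\<lambda>x. (enc (C - {x}), mul_letter m x)) ` C"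
    by (rule subsetD[OF supp_sum_delta])
  then show ?thesis using p(1) by (auto simp: level_def length_rep_mul_letter)
qed

lemma level_bdry_id:
  assumes "p \<in> cells k" "q \<in> supp (bdry_id p)"
  shows "level q = level p"
proof -
  obtain C m where p: "p = (enc C, m)" "clique C" "card C = k" "m \<in> tmon Sig I"
    using assms(1) by (rule cellsE)
  have "q \<in> supp (\<lambda>q. \<Sum>x\<in>C. face_sign x C * delta (enc (C - {x}), m) q)"
    using assms(2) unfolding p(1) bdry_id_enc[OF clique_subset_Sig[OF p(2)]] .
  then have "q \<in> (\<lambda>x. (enc (C - {x}), m)) ` C"
    by (rule subsetD[OF supp_sum_delta])
  then show ?thesis using p(1) by (auto simp: level_def)
qed

lemma level_cone:
  assumes "p \<in> cells k" "q \<in> supp (cone p)"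
  shows "Suc (level q) = level p"
proof -
  obtain C m where p: "p = (enc C, m)" "clique C" "card C = k" "m \<in> tmon Sig I"
    using assms(1) by (rule cellsE)
  let ?a = "pick_last (mul_clique C m)"
  have False_case: "\<not> (rep (mul_clique C m) = [] \<or> ?a \<in> C)"
  proof
    assume "rep (mul_clique C m) = [] \<or> ?a \<in> C"
    then have "cone p = (\<lambda>q. 0)" unfolding p(1) cone_enc[OF clique_subset_Sig[OF p(2)]] Let_def by simp
    then show False using assms(2) by (simp add: supp_def)
  qed
  then have ne: "rep (mul_clique C m) \<noteq> []" and aC: "?a \<notin> C" by auto
  obtain w where w: "(rep m, w @ [?a]) \<in> tr_eq I" using pick_last_extends_clique(2)[OF p(2,4) ne aC] by blast
  have ain: "?a \<in> set (rep m)" using tr_eq_set[OF w] by simp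
  have q: "q = (enc (insert ?a C), div_letter m ?a)"
    using assms(2) False_case unfolding p(1) cone_enc[OF clique_subset_Sig[OF p(2)]] Let_def
    by (auto simp: supp_def delta_def split: if_splits)
  have "length (rep m) \<noteq> 0" using ain by auto
  then show ?thesis using q p(1) length_rep_div_letter[OF ain] by (simp add: level_def)
qed

lemma bdry_bdry_basis:
  assumes "p \<in> cells k"
  shows "lin_ext bdry (bdry p) = (\<lambda>q. 0)"
proof
  fix q
  obtain C m where p: "p = (enc C, m)" "clique C" "card C = k" "m \<in> tmon Sig I"
    using assms by (rule cellsE)
  have CS: "C \<subseteq> Sig" using p(2) by (rule clique_subset_Sig)
  have fC: "finite C" using p(2) by (rule finite_clique)
  let ?T = "\<lambda>x y. delta (enc (C - {x} - {y}), mul_letter (mul_letter m x) y) q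
    - delta (enc (C - {x} - {y}), mul_letter m x) q - delta (enc (C - {x} - {y}), mul_letter m y) q
    + delta (enc (C - {x} - {y}), m) q"
  have "lin_ext bdry (bdry p) q = lin_ext bdry (bdry_mul p) q - lin_ext bdry (bdry_id p) q"
    unfolding bdry_def[of p]
    using lin_ext_diff[OF supp_bdry_mul(1)[OF assms] supp_bdry_id(1)[OF assms]] by metis
  also have "\<dots> = (\<Sum>x\<in>C. face_sign x C * bdry (enc (C - {x}), mul_letter m x) q)
      - (\<Sum>x\<in>C. face_sign x C * bdry (enc (C - {x}), m) q)"
    unfolding p(1) bdry_mul_enc[OF CS] bdry_id_enc[OF CS] lin_ext_sum_delta[OF fC] ..
  also have "\<dots> = (\<Sum>x\<in>C. \<Sum>y\<in>C - {x}. face_sign x C * face_sign y (C - {x}) * ?T x y)"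
  proof -
    have "face_sign x C * bdry (enc (C - {x}), mul_letter m x) q
        - face_sign x C * bdry (enc (C - {x}), m) q =
      (\<Sum>y\<in>C - {x}. face_sign x C * face_sign y (C - {x}) * ?T x y)" for x
    proof -
      have "C - {x} \<subseteq> Sig" using CS by blast
      then show ?thesis
        by (simp add: bdry_enc sum_distrib_left sum_subtractf[symmetric] algebra_simps)
    qed
    then show ?thesis by (simp add: sum_subtractf[symmetric])
  qed
  also have "\<dots> = 0"
  proof (rule sum_antisym_pairs_eq_0[OF fC])
    fix x y assume xy: "x \<in> C" "y \<in> C" "x \<noteq> y"
    have "(x, y) \<in> I" using p(2) xy by (auto simp: clique_def)
    then have "mul_letter (mul_letter m x) y = mul_letter (mul_letter m y) x"
      by (rule mul_letter_commute)
    moreover have "C - {y} - {x} = C - {x} - {y}" by blast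
    ultimately have "?T y x = ?T x y" by simp
    moreover have "face_sign x C * face_sign y (C - {x}) = - (face_sign y C * face_sign x (C - {y}))"
      by (rule face_sign_swap[OF CS xy])
    ultimately show "face_sign y C * face_sign x (C - {y}) * ?T y x =
        - (face_sign x C * face_sign y (C - {x}) * ?T x y)"
      by simp
  qed
  finally show "lin_ext bdry (bdry p) q = 0" .
qed

lemma coeff_sum_bdry_basis:
  assumes "p \<in> cells k"
  shows "coeff_sum (bdry p) = 0"
proof -
  obtain C m where p: "p = (enc C, m)" "clique C" "card C = k" "m \<in> tmon Sig I"
    using assms by (rule cellsE)
  have CS: "C \<subseteq> Sig" using p(2) by (rule clique_subset_Sig)
  have fC: "finite C" using p(2) by (rule finite_clique)
  have "coeff_sum (bdry p) = coeff_sum (bdry_mul p) - coeff_sum (bdry_id p)"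
    unfolding bdry_def[of p]
    by (rule coeff_sum_diff[OF supp_bdry_mul(1)[OF assms] supp_bdry_id(1)[OF assms]])
  also have "\<dots> = 0"
    unfolding p(1) bdry_mul_enc[OF CS] bdry_id_enc[OF CS] coeff_sum_sum_delta[OF fC] by simp
  finally show ?thesis .
qed

lemma act_eq_lin_ext:
  assumes "finite (supp f)"
  shows "act I m' f = lin_ext (act_basis m') f"
proof
  fix p :: "nat \<times> 'a list set"
  obtain j x where p: "p = (j, x)" by (cases p)
  have "lin_ext (act_basis m') f (j, x) =
      (\<Sum>p\<in>supp f. if fst p = j \<and> tmult I m' (snd p) = x then f p else 0)"
    unfolding lin_ext_def act_basis_def by (intro sum.cong refl) (auto simp: delta_def)
  also have "\<dots> = (\<Sum>p\<in>{p\<in>supp f. fst p = j \<and> tmult I m' (snd p) = x}. f p)"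
    using assms by (simp add: sum.inter_filter)
  also have "\<dots> = (\<Sum>p\<in>(\<lambda>y. (j, y)) ` {y. f (j, y) \<noteq> 0 \<and> tmult I m' y = x}. f p)"
    by (intro sum.cong refl) (auto simp: supp_def)
  also have "\<dots> = (\<Sum>y\<in>{y. f (j, y) \<noteq> 0 \<and> tmult I m' y = x}. f (j, y))"
    by (subst sum.reindex) (auto simp: inj_on_def)
  also have "\<dots> = act I m' f (j, x)" by (simp add: act_def)
  finally show "act I m' f p = lin_ext (act_basis m') f p" using p by simp
qed

lemma bdry_act_basis:
  assumes "p \<in> cells k"
  shows "bdry (fst p, tmult I m' (snd p)) = lin_ext (act_basis m') (bdry p)"
proof
  fix q
  obtain C m where p: "p = (enc C, m)" "clique C" "card C = k" "m \<in> tmon Sig I"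
    using assms by (rule cellsE)
  have CS: "C \<subseteq> Sig" using p(2) by (rule clique_subset_Sig)
  have fC: "finite C" using p(2) by (rule finite_clique)
  have "lin_ext (act_basis m') (bdry p) q =
      lin_ext (act_basis m') (bdry_mul p) q - lin_ext (act_basis m') (bdry_id p) q"
    unfolding bdry_def[of p]
    using lin_ext_diff[OF supp_bdry_mul(1)[OF assms] supp_bdry_id(1)[OF assms]] by metis
  also have "\<dots> = (\<Sum>x\<in>C. face_sign x C * act_basis m' (enc (C - {x}), mul_letter m x) q)
      - (\<Sum>x\<in>C. face_sign x C * act_basis m' (enc (C - {x}), m) q)"
    unfolding p(1) bdry_mul_enc[OF CS] bdry_id_enc[OF CS] lin_ext_sum_delta[OF fC] ..
  also have "\<dots> = bdry (fst p, tmult I m' (snd p)) q"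
    unfolding p(1) using CS
    by (simp add: bdry_enc act_basis_def tmult_mul_letter right_diff_distrib sum_subtractf)
  finally show "bdry (fst p, tmult I m' (snd p)) q = lin_ext (act_basis m') (bdry p) q" by simp
qed

lemma coeff_sum_act_basis: "coeff_sum (act_basis m' p) = 1"
  unfolding act_basis_def coeff_sum_def supp_delta by (simp add: delta_def)

lemma finite_supp_act_basis: "finite (supp (act_basis m' p))"
  by (simp add: act_basis_def supp_delta)

abbreviation chains :: "nat \<Rightarrow> (nat \<times> 'a list set \<Rightarrow> int) set" where
  "chains k \<equiv> free_mod Sig I (clique_codes k)"

lemma chains_iff: "f \<in> chains k \<longleftrightarrow> finite (supp f) \<and> supp f \<subseteq> cells k"
  by (simp add: free_mod_iff cells_def)

lemma zero_in_chains: "(\<lambda>_. 0) \<in> chains k"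
  by (simp add: chains_iff)

lemma lin_ext_in_chains:
  assumes "f \<in> chains k" "\<And>p. p \<in> cells k \<Longrightarrow> finite (supp (D p)) \<and> supp (D p) \<subseteq> cells k'"
  shows "lin_ext D f \<in> chains k'"
proof -
  have f: "finite (supp f)" "supp f \<subseteq> cells k" using assms(1) by (auto simp: chains_iff)
  have "finite (supp (lin_ext D f))" using f assms(2) by (intro finite_supp_lin_ext) auto
  moreover have "supp (lin_ext D f) \<subseteq> cells k'" using supp_lin_ext[of D f] f assms(2) by blast
  ultimately show ?thesis by (simp add: chains_iff)
qed

lemma bdry_in_chains:
  assumes "f \<in> chains k"
  shows "lin_ext bdry f \<in> chains (k - 1)"
  using assms
proof (rule lin_ext_in_chains)
  fix p assume "p \<in> cells k"
  then show "finite (supp (bdry p)) \<and> supp (bdry p) \<subseteq> cells (k - 1)"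
    using supp_bdry[of p k] by blast
qed

lemma cone_in_chains:
  assumes "f \<in> chains k"
  shows "lin_ext cone f \<in> chains (Suc k)"
  using assms
proof (rule lin_ext_in_chains)
  fix p assume "p \<in> cells k"
  then show "finite (supp (cone p)) \<and> supp (cone p) \<subseteq> cells (Suc k)"
    using supp_cone[of p k] by blast
qed

lemma diff_in_chains: "f \<in> chains k \<Longrightarrow> g \<in> chains k \<Longrightarrow> (\<lambda>p. f p - g p) \<in> chains k"
  using supp_diff[of f g] by (auto simp: chains_iff intro: finite_subset)

lemma fadd_in_chains: "f \<in> chains k \<Longrightarrow> g \<in> chains k \<Longrightarrow> fadd f g \<in> chains k"
  using supp_add[of f g] by (auto simp: chains_iff fadd_def intro: finite_subset)

lemma bdry_fadd:
  "f \<in> chains k \<Longrightarrow> g \<in> chains k \<Longrightarrow>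
    lin_ext bdry (fadd f g) = fadd (lin_ext bdry f) (lin_ext bdry g)"
  unfolding fadd_def by (rule lin_ext_add) (auto simp: chains_iff)

lemma bdry_diff:
  "f \<in> chains k \<Longrightarrow> g \<in> chains k \<Longrightarrow>
    lin_ext bdry (\<lambda>p. f p - g p) = (\<lambda>q. lin_ext bdry f q - lin_ext bdry g q)"
  by (rule lin_ext_diff) (auto simp: chains_iff)

lemma bdry_act:
  assumes "f \<in> chains k"
  shows "lin_ext bdry (act I m' f) = act I m' (lin_ext bdry f)"
proof -
  have f: "finite (supp f)" "supp f \<subseteq> cells k" using assms by (auto simp: chains_iff)
  have "lin_ext bdry (act I m' f) = lin_ext bdry (lin_ext (act_basis m') f)" using act_eq_lin_ext[OF f(1)] by simp
  also have "\<dots> = lin_ext (\<lambda>p. lin_ext bdry (act_basis m' p)) f"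
    by (rule lin_ext_comp[OF f(1) finite_supp_act_basis])
  also have "\<dots> = lin_ext (\<lambda>p. lin_ext (act_basis m') (bdry p)) f"
  proof (rule lin_ext_cong)
    fix p assume "p \<in> supp f"
    then have "p \<in> cells k" using f by blast
    then show "lin_ext bdry (act_basis m' p) = lin_ext (act_basis m') (bdry p)"
      using bdry_act_basis[of p k m'] by (simp add: act_basis_def lin_ext_delta)
  qed
  also have "\<dots> = lin_ext (act_basis m') (lin_ext bdry f)"
    using f supp_bdry(1) by (intro lin_ext_comp[symmetric]) auto
  also have "\<dots> = act I m' (lin_ext bdry f)"
    using bdry_in_chains[OF assms] by (intro act_eq_lin_ext[symmetric]) (simp add: chains_iff)
  finally show ?thesis .
qed

lemma bdry_bdry:
  assumes "f \<in> chains k"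
  shows "lin_ext bdry (lin_ext bdry f) = (\<lambda>_. 0)"
proof -
  have f: "finite (supp f)" "supp f \<subseteq> cells k" using assms by (auto simp: chains_iff)
  have "lin_ext bdry (lin_ext bdry f) = lin_ext (\<lambda>p. lin_ext bdry (bdry p)) f"
    using f supp_bdry(1) by (intro lin_ext_comp) auto
  also have "\<dots> = lin_ext (\<lambda>p q. 0) f"
    by (rule lin_ext_cong) (use f bdry_bdry_basis in blast)
  finally show ?thesis by (simp add: lin_ext_zero_op)
qed

lemma coeff_sum_bdry:
  assumes "f \<in> chains k"
  shows "coeff_sum (lin_ext bdry f) = 0"
proof -
  have f: "finite (supp f)" "supp f \<subseteq> cells k" using assms by (auto simp: chains_iff)
  have "coeff_sum (lin_ext bdry f) = (\<Sum>p\<in>supp f. f p * coeff_sum (bdry p))"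
    using f supp_bdry(1) by (intro coeff_sum_lin_ext) auto
  also have "\<dots> = 0" using f coeff_sum_bdry_basis by (intro sum.neutral) auto
  finally show ?thesis .
qed

lemma coeff_sum_act:
  assumes "f \<in> chains k"
  shows "coeff_sum (act I m' f) = coeff_sum f"
proof -
  have f: "finite (supp f)" using assms by (simp add: chains_iff)
  have "coeff_sum (act I m' f) = coeff_sum (lin_ext (act_basis m') f)" using act_eq_lin_ext[OF f] by simp
  also have "\<dots> = (\<Sum>p\<in>supp f. f p * coeff_sum (act_basis m' p))"
    by (rule coeff_sum_lin_ext[OF f finite_supp_act_basis])
  also have "\<dots> = coeff_sum f" by (simp only: coeff_sum_act_basis) (simp add: coeff_sum_def)
  finally show ?thesis .
qed

lemma coeff_sum_fadd:
  "f \<in> chains k \<Longrightarrow> g \<in> chains k \<Longrightarrow> coeff_sum (fadd f g) = coeff_sum f + coeff_sum g"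
  unfolding fadd_def by (rule coeff_sum_add) (auto simp: chains_iff)

lemma coeff_sum_surj: "coeff_sum ` chains 0 = UNIV"
proof -
  have c: "(enc {}, trace I []) \<in> cells 0"
    using clique_empty by (rule in_cellsI) (auto intro: trace_in_tmon)
  have "z \<in> coeff_sum ` chains 0" for z
  proof
    let ?f = "\<lambda>q. z * delta (enc {}, trace I []) q"
    have s: "supp ?f \<subseteq> {(enc {}, trace I [])}" by (auto simp: supp_def delta_def)
    then show "?f \<in> chains 0" using c by (auto simp: chains_iff intro: finite_subset)
    show "z = coeff_sum ?f" using coeff_sum_eq[OF _ s] by (simp add: delta_def)
  qed
  then show ?thesis by blast
qed

lemma bdry_mul_cells0:
  assumes "p \<in> cells 0"
  shows "bdry_mul p = (\<lambda>q. 0)"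
proof -
  obtain C m where p: "p = (enc C, m)" "clique C" "card C = 0" "m \<in> tmon Sig I"
    using assms by (rule cellsE)
  have "C = {}" using p(3) finite_clique[OF p(2)] by simp
  then show ?thesis using p(1) by (simp add: bdry_mul_enc)
qed

lemma bdry_split: "bdry = (\<lambda>p q. bdry_mul p q - bdry_id p q)"
  by (simp add: bdry_def fun_eq_iff)

section \<open>The contracting homotopy\<close>

lemma cone_face:
  assumes "clique C" "x \<in> C" "rep (mul_clique C m) \<noteq> []"
  defines "a \<equiv> pick_last (mul_clique C m)"
  shows "cone (enc (C - {x}), mul_letter m x) =
    (if a \<in> C - {x} then (\<lambda>q. 0)
     else (\<lambda>q. face_sign a (insert a (C - {x})) *
                delta (enc (insert a (C - {x})), div_letter (mul_letter m x) a) q))"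
proof -
  have "mul_clique (C - {x}) (mul_letter m x) = mul_clique C m"
    using mul_clique_face[OF assms(1,2)] .
  moreover have "C - {x} \<subseteq> Sig" using clique_subset_Sig[OF assms(1)] by blast
  ultimately show ?thesis using assms(3) by (simp add: cone_enc a_def Let_def)
qed

lemma lin_ext_cone_bdry_mul_enc:
  assumes "clique C"
  shows "lin_ext cone (bdry_mul (enc C, m)) =
    (\<lambda>q. \<Sum>x\<in>C. face_sign x C * cone (enc (C - {x}), mul_letter m x) q)"
  unfolding bdry_mul_enc[OF clique_subset_Sig[OF assms]]
  using finite_clique[OF assms] by (rule lin_ext_sum_delta)

lemma cone_homotopy_last_in_clique:
  assumes "clique C" "m \<in> tmon Sig I" "rep (mul_clique C m) \<noteq> []"
    and a: "pick_last (mul_clique C m) \<in> C"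
  shows "lin_ext bdry_mul (cone (enc C, m)) q + lin_ext cone (bdry_mul (enc C, m)) q
    = delta (enc C, m) q"
proof -
  let ?a = "pick_last (mul_clique C m)"
  have "cone (enc C, m) = (\<lambda>q. 0)"
    using a by (simp add: cone_enc[OF clique_subset_Sig[OF assms(1)]] Let_def)
  moreover have "lin_ext cone (bdry_mul (enc C, m)) q =
      (\<Sum>x\<in>C. if x = ?a then face_sign ?a C * (face_sign ?a C * delta (enc C, m) q) else 0)"
    unfolding lin_ext_cone_bdry_mul_enc[OF assms(1)]
  proof (rule sum.cong[OF refl])
    fix x assume x: "x \<in> C"
    show "face_sign x C * cone (enc (C - {x}), mul_letter m x) q =
      (if x = ?a then face_sign ?a C * (face_sign ?a C * delta (enc C, m) q) else 0)"
      using cone_face[OF assms(1) x assms(3)] a x div_letter_mul_letter_same[OF assms(2)]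
      by (auto simp: insert_absorb)
  qed
  ultimately show ?thesis
    using a finite_clique[OF assms(1)] by (simp add: mult.assoc[symmetric])
qed

lemma cone_homotopy_last_not_in_clique:
  assumes C: "clique C" and m: "m \<in> tmon Sig I" and ne: "rep (mul_clique C m) \<noteq> []"
    and a: "pick_last (mul_clique C m) \<notin> C"
  shows "lin_ext bdry_mul (cone (enc C, m)) q + lin_ext cone (bdry_mul (enc C, m)) q
    = delta (enc C, m) q"
proof -
  let ?a = "pick_last (mul_clique C m)"
  let ?D = "insert ?a C"
  let ?face = "\<lambda>y. delta (enc (?D - {y}), mul_letter (div_letter m ?a) y) q"
  obtain w where w: "(rep m, w @ [?a]) \<in> tr_eq I"
    using pick_last_extends_clique(2)[OF C m ne a] by blast
  have D: "clique ?D" using pick_last_extends_clique(1)[OF C m ne a] .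
  have fC: "finite C" using finite_clique[OF C] .
  have "lin_ext bdry_mul (cone (enc C, m)) q =
      face_sign ?a ?D * bdry_mul (enc ?D, div_letter m ?a) q"
    using a ne by (simp add: cone_enc[OF clique_subset_Sig[OF C]] Let_def lin_ext_scaled_delta)
  also have "\<dots> = face_sign ?a ?D * (face_sign ?a ?D * delta (enc C, m) q +
      (\<Sum>y\<in>C. face_sign y ?D * ?face y))"
    unfolding bdry_mul_enc[OF clique_subset_Sig[OF D]]
    using a fC mul_letter_div_letter[OF m w] by (simp add: sum.insert)
  also have "\<dots> = delta (enc C, m) q + (\<Sum>y\<in>C. face_sign ?a ?D * face_sign y ?D * ?face y)"
    by (simp add: distrib_left sum_distrib_left mult.assoc[symmetric])
  finally have mul_cone: "lin_ext bdry_mul (cone (enc C, m)) q =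
      delta (enc C, m) q + (\<Sum>y\<in>C. face_sign ?a ?D * face_sign y ?D * ?face y)" .
  have cone_mul: "lin_ext cone (bdry_mul (enc C, m)) q =
      (\<Sum>y\<in>C. face_sign y C * face_sign ?a (?D - {y}) * ?face y)"
    unfolding lin_ext_cone_bdry_mul_enc[OF C]
  proof (rule sum.cong[OF refl])
    fix y assume y: "y \<in> C"
    then have "y \<noteq> ?a" "insert ?a (C - {y}) = ?D - {y}" using a by auto
    then show "face_sign y C * cone (enc (C - {y}), mul_letter m y) q =
        face_sign y C * face_sign ?a (?D - {y}) * ?face y"
      using cone_face[OF C y ne] a div_letter_mul_letter_other by simp
  qed
  have signs: "face_sign ?a ?D * face_sign y ?D + face_sign y C * face_sign ?a (?D - {y}) = 0"
    if "y \<in> C" for y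
    using face_sign_insert_cancel[OF clique_subset_Sig[OF D] a that] .
  have "(\<Sum>y\<in>C. face_sign ?a ?D * face_sign y ?D * ?face y) +
      (\<Sum>y\<in>C. face_sign y C * face_sign ?a (?D - {y}) * ?face y) =
      (\<Sum>y\<in>C. (face_sign ?a ?D * face_sign y ?D + face_sign y C * face_sign ?a (?D - {y})) * ?face y)"
    by (simp only: sum.distrib distrib_right)
  also have "\<dots> = 0" using signs by simp
  finally show ?thesis unfolding mul_cone cone_mul by simp
qed

lemma cone_homotopy_basis:
  assumes "p \<in> cells k" "rep (mul_clique (dec (fst p)) (snd p)) \<noteq> []"
  shows "(\<lambda>q. lin_ext bdry_mul (cone p) q + lin_ext cone (bdry_mul p) q) = delta p"
proof -
  obtain C m where p: "p = (enc C, m)" "clique C" "card C = k" "m \<in> tmon Sig I"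
    using assms(1) by (rule cellsE)
  have ne: "rep (mul_clique C m) \<noteq> []" using assms(2) p(1) clique_subset_Sig[OF p(2)] by simp
  show ?thesis
    using cone_homotopy_last_in_clique[OF p(2,4) ne] cone_homotopy_last_not_in_clique[OF p(2,4) ne]
    unfolding p(1) by blast
qed

lemma cone_homotopy:
  assumes "h \<in> chains k" "\<And>p. p \<in> supp h \<Longrightarrow> rep (mul_clique (dec (fst p)) (snd p)) \<noteq> []"
  shows "(\<lambda>q. lin_ext bdry_mul (lin_ext cone h) q + lin_ext cone (lin_ext bdry_mul h) q) = h"
proof -
  have h: "finite (supp h)" "supp h \<subseteq> cells k" using assms(1) by (auto simp: chains_iff)
  have 1: "lin_ext bdry_mul (lin_ext cone h) = lin_ext (\<lambda>p. lin_ext bdry_mul (cone p)) h"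
    using h supp_cone(1) by (intro lin_ext_comp) auto
  have 2: "lin_ext cone (lin_ext bdry_mul h) = lin_ext (\<lambda>p. lin_ext cone (bdry_mul p)) h"
    using h supp_bdry_mul(1) by (intro lin_ext_comp) auto
  have "(\<lambda>q. lin_ext bdry_mul (lin_ext cone h) q + lin_ext cone (lin_ext bdry_mul h) q) =
      lin_ext (\<lambda>p q. lin_ext bdry_mul (cone p) q + lin_ext cone (bdry_mul p) q) h"
    unfolding 1 2 lin_ext_op_add ..
  also have "\<dots> = lin_ext delta h"
  proof (rule lin_ext_cong)
    fix p assume p: "p \<in> supp h"
    show "(\<lambda>q. lin_ext bdry_mul (cone p) q + lin_ext cone (bdry_mul p) q) = delta p"
      by (rule cone_homotopy_basis) (use p h assms(2) in auto)
  qed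
  also have "\<dots> = h" by (rule lin_ext_delta_id[OF h(1)])
  finally show ?thesis .
qed

section \<open>Exactness\<close>

lemma level_lin_ext_bdry_mul:
  assumes "f \<in> chains k" "q \<in> supp (lin_ext bdry_mul f)"
  shows "\<exists>p\<in>supp f. level q = Suc (level p)"
proof -
  obtain p where p: "p \<in> supp f" "q \<in> supp (bdry_mul p)"
    using assms(2) supp_lin_ext[of bdry_mul f] by blast
  then have "p \<in> cells k" using assms(1) by (auto simp: chains_iff)
  from level_bdry_mul[OF this p(2)] show ?thesis using p(1) by blast
qed

lemma level_lin_ext_bdry_id:
  assumes "f \<in> chains k" "q \<in> supp (lin_ext bdry_id f)"
  shows "\<exists>p\<in>supp f. level q = level p"
proof -
  obtain p where p: "p \<in> supp f" "q \<in> supp (bdry_id p)"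
    using assms(2) supp_lin_ext[of bdry_id f] by blast
  then have "p \<in> cells k" using assms(1) by (auto simp: chains_iff)
  from level_bdry_id[OF this p(2)] show ?thesis using p(1) by blast
qed

lemma level_lin_ext_cone:
  assumes "f \<in> chains k" "q \<in> supp (lin_ext cone f)"
  shows "\<exists>p\<in>supp f. Suc (level q) = level p"
proof -
  obtain p where p: "p \<in> supp f" "q \<in> supp (cone p)"
    using assms(2) supp_lin_ext[of cone f] by blast
  then have "p \<in> cells k" using assms(1) by (auto simp: chains_iff)
  from level_cone[OF this p(2)] show ?thesis using p(1) by blast
qed

lemma rep_mul_clique_nonempty:
  assumes "p \<in> cells k" "level p + k \<noteq> 0"
  shows "rep (mul_clique (dec (fst p)) (snd p)) \<noteq> []"
proof -
  obtain C m where p: "p = (enc C, m)" "clique C" "card C = k" "m \<in> tmon Sig I"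
    using assms(1) by (rule cellsE)
  have "length (rep (mul_clique C m)) = level p + k"
    using length_rep_mul_clique[OF finite_clique[OF p(2)]] p(1,3) by (simp add: level_def)
  then show ?thesis using assms(2) p(1) clique_subset_Sig[OF p(2)] by auto
qed

text \<open>In degree 0 the augmentation plays the role of the boundary.\<close>

definition is_cycle :: "nat \<Rightarrow> (nat \<times> 'a list set \<Rightarrow> int) \<Rightarrow> bool" where
  "is_cycle k f \<longleftrightarrow> (if k = 0 then coeff_sum f = 0 else lin_ext bdry f = (\<lambda>_. 0))"

definition top_part :: "nat \<Rightarrow> (nat \<times> 'a list set \<Rightarrow> int) \<Rightarrow> nat \<times> 'a list set \<Rightarrow> int" where
  "top_part N f = (\<lambda>p. if level p = N then f p else 0)"

lemma top_part_in_chains: "f \<in> chains k \<Longrightarrow> top_part N f \<in> chains k"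
  by (auto simp: chains_iff top_part_def supp_def elim!: rev_finite_subset)

lemma level_top_part: "p \<in> supp (top_part N f) \<Longrightarrow> level p = N"
  by (auto simp: top_part_def supp_def split: if_splits)

lemma level_diff_top_part:
  assumes "\<forall>p\<in>supp f. level p \<le> N" "f q - top_part N f q \<noteq> 0"
  shows "level q < N"
proof -
  have "f q \<noteq> 0" "level q \<noteq> N" using assms(2) by (auto simp: top_part_def split: if_splits)
  then have "level q \<le> N" using assms(1) unfolding supp_def by blast
  with \<open>level q \<noteq> N\<close> show ?thesis by simp
qed

lemma is_cycle_diff_bdry:
  assumes "f \<in> chains k" "is_cycle k f" "g \<in> chains (Suc k)"
  shows "is_cycle k (\<lambda>p. f p - lin_ext bdry g p)"
proof -
  have dg: "lin_ext bdry g \<in> chains k" using bdry_in_chains[OF assms(3)] by simp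
  show ?thesis
  proof (cases "k = 0")
    case True
    have "coeff_sum (\<lambda>p. f p - lin_ext bdry g p) = coeff_sum f - coeff_sum (lin_ext bdry g)"
      by (rule coeff_sum_diff) (use assms(1) dg in \<open>auto simp: chains_iff\<close>)
    then show ?thesis using True assms(2) coeff_sum_bdry[OF assms(3)] by (simp add: is_cycle_def)
  next
    case False
    then show ?thesis
      using assms(2) bdry_diff[OF assms(1) dg] bdry_bdry[OF assms(3)] by (simp add: is_cycle_def)
  qed
qed

text \<open>At level 0 the only basis element of degree 0 is \<open>1[{}]\<close>.\<close>

lemma level0_cycle_eq_0:
  assumes "f \<in> chains 0" "coeff_sum f = 0" "\<forall>p\<in>supp f. level p = 0"
  shows "f = (\<lambda>_. 0)"
proof -
  let ?p0 = "(enc {}, trace I [])"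
  have s: "supp f \<subseteq> {?p0}"
  proof
    fix p assume p: "p \<in> supp f"
    then have "p \<in> cells 0" using assms(1) by (auto simp: chains_iff)
    then obtain C m where c: "p = (enc C, m)" "clique C" "card C = 0" "m \<in> tmon Sig I"
      by (rule cellsE)
    have "C = {}" using c(3) finite_clique[OF c(2)] by simp
    moreover have "level p = 0" using assms(3) p by blast
    then have "rep m = []" using c(1) by (simp add: level_def)
    then have "m = trace I []" using tmon_rep(1)[OF c(4)] by simp
    ultimately show "p \<in> {?p0}" using c(1) by simp
  qed
  have "f ?p0 = 0" using coeff_sum_eq[OF _ s] assms(2) by simp
  then show ?thesis using s by (auto simp: supp_def fun_eq_iff)
qed

text \<open>At level \<open>N + 1\<close> only \<open>bdry_mul (top_part N f)\<close> contributes to \<open>\<partial>f = 0\<close>.\<close>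

lemma bdry_mul_top_part_eq_0:
  assumes f: "f \<in> chains k" "is_cycle k f" and N: "\<forall>p\<in>supp f. level p \<le> N"
  shows "lin_ext bdry_mul (top_part N f) = (\<lambda>_. 0)"
proof (cases "k = 0")
  case True
  have "lin_ext bdry_mul (top_part N f) = lin_ext (\<lambda>p q. 0) (top_part N f)"
    by (rule lin_ext_cong)
      (use top_part_in_chains[OF f(1)] True bdry_mul_cells0 in \<open>auto simp: chains_iff\<close>)
  then show ?thesis by (simp add: lin_ext_zero_op)
next
  case False
  let ?h = "top_part N f" and ?r = "\<lambda>p. f p - top_part N f p"
  have h: "?h \<in> chains k" using top_part_in_chains[OF f(1)] .
  have r: "?r \<in> chains k" using diff_in_chains[OF f(1) h] .
  have r_level: "level p < N" if "p \<in> supp ?r" for p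
    using that level_diff_top_part[OF N] by (simp add: supp_def)
  have "lin_ext bdry_mul ?h q = 0" for q
  proof (rule ccontr)
    assume nz: "lin_ext bdry_mul ?h q \<noteq> 0"
    then have q: "level q = Suc N"
      using level_lin_ext_bdry_mul[OF h] level_top_part by (fastforce simp: supp_def)
    have "lin_ext bdry_mul ?r q = 0"
      using level_lin_ext_bdry_mul[OF r, of q] r_level q by (fastforce simp: supp_def)
    moreover have "lin_ext bdry_id f q = 0"
      using level_lin_ext_bdry_id[OF f(1), of q] N q by (fastforce simp: supp_def)
    moreover have "f = (\<lambda>p. ?h p + ?r p)" by simp
    then have "lin_ext bdry_mul f q = lin_ext bdry_mul ?h q + lin_ext bdry_mul ?r q"
      using h r lin_ext_add[of ?h ?r bdry_mul] by (metis (no_types, lifting) chains_iff)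
    moreover have "lin_ext bdry f q = 0" using f(2) False by (simp add: is_cycle_def)
    ultimately show False using nz by (simp add: bdry_split lin_ext_op_diff)
  qed
  then show ?thesis by blast
qed

text \<open>The cone homotopy gives back the top part through \<open>bdry_mul\<close>, and what \<open>bdry_id\<close> adds
  stays one level lower.\<close>

lemma level_diff_bdry_cone_top_part:
  assumes f: "f \<in> chains k" "is_cycle k f" and N: "\<forall>p\<in>supp f. level p \<le> N"
    and nontrivial: "k + N \<noteq> 0"
  shows "\<forall>q\<in>supp (\<lambda>q. f q - lin_ext bdry (lin_ext cone (top_part N f)) q). level q < N"
proof
  let ?h = "top_part N f"
  let ?g = "lin_ext cone ?h"
  fix q assume q: "q \<in> supp (\<lambda>q. f q - lin_ext bdry ?g q)"
  have h: "?h \<in> chains k" using top_part_in_chains[OF f(1)] .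
  have g: "?g \<in> chains (Suc k)" using cone_in_chains[OF h] .
  have g_level: "Suc (level p) = N" if "p \<in> supp ?g" for p
    using level_lin_ext_cone[OF h that] level_top_part by force
  have "?h p \<noteq> 0 \<Longrightarrow> rep (mul_clique (dec (fst p)) (snd p)) \<noteq> []" for p
    using h nontrivial level_top_part[of p N f]
    by (intro rep_mul_clique_nonempty[of p k]) (auto simp: chains_iff supp_def)
  then have "(\<lambda>q. lin_ext bdry_mul ?g q + lin_ext cone (lin_ext bdry_mul ?h) q) = ?h"
    using cone_homotopy[OF h] by (simp add: supp_def)
  then have "lin_ext bdry_mul ?g = ?h"
    unfolding bdry_mul_top_part_eq_0[OF f N] by simp
  then have "f q - lin_ext bdry ?g q = (f q - ?h q) + lin_ext bdry_id ?g q"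
    by (simp add: bdry_split lin_ext_op_diff)
  then consider "f q - ?h q \<noteq> 0" | "q \<in> supp (lin_ext bdry_id ?g)"
    using q by (force simp: supp_def)
  then show "level q < N"
  proof cases
    case 1
    then show ?thesis using level_diff_top_part[OF N] by blast
  next
    case 2
    then obtain p where "p \<in> supp ?g" "level q = level p"
      using level_lin_ext_bdry_id[OF g] by blast
    then show ?thesis using g_level by fastforce
  qed
qed

lemma cycle_is_boundary_below_level:
  assumes "f \<in> chains k" "is_cycle k f" "\<forall>p\<in>supp f. level p < N"
  shows "\<exists>g\<in>chains (Suc k). f = lin_ext bdry g"
  using assms
proof (induction N arbitrary: f)
  case 0
  then have "f = (\<lambda>_. 0)" by (auto simp: supp_def)
  then show ?case using zero_in_chains by (intro bexI[of _ "\<lambda>_. 0"]) auto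
next
  case (Suc N)
  show ?case
  proof (cases "k + N = 0")
    case True
    then have "f = (\<lambda>_. 0)"
      using Suc.prems by (intro level0_cycle_eq_0) (auto simp: is_cycle_def)
    then show ?thesis using zero_in_chains by (intro bexI[of _ "\<lambda>_. 0"]) auto
  next
    case False
    define g where "g = lin_ext cone (top_part N f)"
    have g: "g \<in> chains (Suc k)"
      unfolding g_def using cone_in_chains top_part_in_chains Suc.prems(1) by blast
    obtain g' where g': "g' \<in> chains (Suc k)" "(\<lambda>q. f q - lin_ext bdry g q) = lin_ext bdry g'"
    proof (rule Suc.IH[THEN bexE])
      show "(\<lambda>q. f q - lin_ext bdry g q) \<in> chains k"
        using diff_in_chains[OF Suc.prems(1)] bdry_in_chains[OF g] by simp
      show "is_cycle k (\<lambda>q. f q - lin_ext bdry g q)"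
        using is_cycle_diff_bdry[OF Suc.prems(1,2) g] .
      show "\<forall>q\<in>supp (\<lambda>q. f q - lin_ext bdry g q). level q < N"
        unfolding g_def using level_diff_bdry_cone_top_part[OF Suc.prems(1,2) _ False] Suc.prems(3)
        by fastforce
    qed
    then have "f q = lin_ext bdry g q + lin_ext bdry g' q" for q
      using fun_cong[OF g'(2), of q] by simp
    then have "f = fadd (lin_ext bdry g) (lin_ext bdry g')" by (auto simp: fadd_def)
    also have "\<dots> = lin_ext bdry (fadd g g')" by (rule bdry_fadd[symmetric, OF g g'(1)])
    finally show ?thesis using fadd_in_chains[OF g g'(1)] by blast
  qed
qed

lemma image_bdry_eq_cycles:
  "lin_ext bdry ` chains (Suc k) = {f \<in> chains k. is_cycle k f}"
proof
  show "lin_ext bdry ` chains (Suc k) \<subseteq> {f \<in> chains k. is_cycle k f}"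
    using bdry_in_chains[of _ "Suc k"] bdry_bdry coeff_sum_bdry by (auto simp: is_cycle_def)
  show "{f \<in> chains k. is_cycle k f} \<subseteq> lin_ext bdry ` chains (Suc k)"
  proof safe
    fix f assume f: "f \<in> chains k" "is_cycle k f"
    obtain N where "\<forall>p\<in>supp f. level p < N"
      using f(1) finite_nat_set_iff_bounded[of "level ` supp f"] by (auto simp: chains_iff)
    then show "f \<in> lin_ext bdry ` chains (Suc k)"
      using cycle_is_boundary_below_level[OF f] by blast
  qed
qed

lemma augmentation_coeff_sum: "augmentation Sig I (clique_codes 0) coeff_sum"
  unfolding augmentation_def using coeff_sum_fadd coeff_sum_act coeff_sum_surj by blast

lemma zm_hom_bdry: "zm_hom Sig I (clique_codes k) (clique_codes (k - 1)) (lin_ext bdry)"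
  unfolding zm_hom_def using bdry_in_chains bdry_fadd bdry_act by blast

lemma inj_on_bdry_top_degree:
  assumes "0 < n" "clique_codes (Suc n) = {}"
  shows "inj_on (lin_ext bdry) (chains n)"
proof (rule inj_onI)
  fix f f' assume ff: "f \<in> chains n" "f' \<in> chains n" "lin_ext bdry f = lin_ext bdry f'"
  have "is_cycle n (\<lambda>p. f p - f' p)"
    using assms(1) ff(3) bdry_diff[OF ff(1,2)] by (simp add: is_cycle_def)
  then obtain g where g: "g \<in> chains (Suc n)" "(\<lambda>p. f p - f' p) = lin_ext bdry g"
    using image_bdry_eq_cycles diff_in_chains[OF ff(1,2)] by blast
  have "supp g \<subseteq> cells (Suc n)" using g(1) by (simp add: chains_iff)
  then have "g = (\<lambda>_. 0)" using assms(2) by (auto simp: cells_def supp_def)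
  then have "(\<lambda>p. f p - f' p) = (\<lambda>_. 0)" using g(2) by simp
  then show "f = f'" by (auto simp: fun_eq_iff dest: fun_cong)
qed

lemma free_resolution_of_clique_bound:
  assumes "1 \<le> n" "\<And>C. clique C \<Longrightarrow> card C \<le> n"
  shows "free_resolution Sig I n clique_codes (\<lambda>_. lin_ext bdry) coeff_sum"
proof -
  have "clique_codes (Suc n) = {}" using assms(2) by (fastforce simp: clique_codes_def)
  then show ?thesis
    unfolding free_resolution_def
    using assms(1) augmentation_coeff_sum zm_hom_bdry image_bdry_eq_cycles[of 0]
      image_bdry_eq_cycles[of k for k] inj_on_bdry_top_degree[of n]
    by (auto simp: is_cycle_def)
qed

end

theorem corollary2p4:
  fixes Sig :: "'a set" and I :: "('a \<times> 'a) set" and n :: nat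
  assumes "finite Sig"
    and "I \<subseteq> Sig \<times> Sig"
    and "sym I"
    and "irrefl I"
    and "1 \<le> n"
    and "\<forall>C \<subseteq> Sig. (\<forall>a \<in> C. \<forall>b \<in> C. a \<noteq> b \<longrightarrow> (a, b) \<in> I) \<longrightarrow> card C \<le> n"
  shows "has_free_resolution_le Sig I n"
proof -
  obtain idx :: "'a \<Rightarrow> nat" where "inj_on idx Sig"
    using finite_imp_inj_to_nat_seg[OF assms(1)] by blast
  then interpret trace_monoid Sig I idx
    using assms(1,3,4) by unfold_locales
  have "free_resolution Sig I n clique_codes (\<lambda>_. lin_ext bdry) coeff_sum"
    using assms(5,6) by (intro free_resolution_of_clique_bound) (auto simp: clique_def)
  then show ?thesis unfolding has_free_resolution_le_def by blast
qed

end
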